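(* Let $n \geq 2$ be an integer and let $L$ be a totally real Galois extension of $\mathbb{Q}$ with $\operatorname{Gal}(L/\mathbb{Q}) \cong (\mathbb{Z}/2\mathbb{Z})^n$. Then for every nonzero $w \in \bigwedge^2 \operatorname{LOG}(\mathcal{O}_L^* )$, \[ \|w\|_1 \geq 2 \log\left(\frac{1+\sqrt{5}}{2}\right)\log(1+\sqrt{2}) \approx 0.8483 . \]
   Context: For a number field $L$, let $\mathcal{A}_L$ be its set of Archimedean places and $\mathcal{O}_L^*$ its unit group. Define $\operatorname{LOG}:\mathcal{O}_L^* \to \mathbb{R}^{\mathcal{A}_L}$ by $(\operatorname{LOG}(\gamma))_v = e_v \log|\gamma|_v$, where $e_v=1$ if $v$ is real and $e_v=2$ if $v$ is complex, and $|\cdot|_v$ is the absolute value associated to $v$ extending the usual absolute value on $\mathbb{Q}$. Let $\{\delta^v\}_{v\in\mathcal{A}_L}$ be the standard orthonormal basis of $\mathbb{R}^{\mathcal{A}_L}$; for each $2$-element subset $I=\{v_1,v_2\}$ of $\mathcal{A}_L$ (with a fixed ordering) put $\delta^I=\delta^{v_1}\wedge\delta^{v_2}$, giving a basis of $\bigwedge^2\mathbb{R}^{\mathcal{A}_L}$. For $w=\sum_I c_I\delta^I$, define $\|w\|_1=\sum_I |c_I|$. $\bigwedge^2\operatorname{LOG}(\mathcal{O}_L^* )$ denotes the subgroup of $\bigwedge^2\mathbb{R}^{\mathcal{A}_L}$ generated by all $\operatorname{LOG}(\epsilon_1)\wedge\operatorname{LOG}(\epsilon_2)$ with $\epsilon_1,\epsilon_2\in\mathcal{O}_L^*$.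 *)

theory Defs
  imports "HOL-Analysis.Analysis" "HOL-Computational_Algebra.Polynomial"
    "HOL-Algebra.Elementary_Groups" "HOL-Algebra.Product_Groups"
begin

text \<open>Number fields are modelled as subfields of the complex numbers that are
finite-dimensional over the rationals.\<close>

definition subfield_C :: "complex set \<Rightarrow> bool" where
  "subfield_C L \<longleftrightarrow> 0 \<in> L \<and> 1 \<in> L \<and>
     (\<forall>x\<in>L. \<forall>y\<in>L. x + y \<in> L \<and> x - y \<in> L \<and> x * y \<in> L) \<and>
     (\<forall>x\<in>L. x \<noteq> 0 \<longrightarrow> inverse x \<in> L)"

definition number_field :: "complex set \<Rightarrow> bool" where
  "number_field L \<longleftrightarrow> subfield_C L \<and>
     (\<exists>B. finite B \<and> B \<subseteq> L \<and>
        (\<forall>x\<in>L. \<exists>c::complex \<Rightarrow> rat. x = (\<Sum>b\<in>B. of_rat (c b) * b)))"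

definition embeddings :: "complex set \<Rightarrow> (complex \<Rightarrow> complex) set" where
  "embeddings L = {\<sigma>. \<sigma> \<in> extensional L \<and> \<sigma> 1 = 1 \<and>
     (\<forall>x\<in>L. \<forall>y\<in>L. \<sigma> (x + y) = \<sigma> x + \<sigma> y \<and> \<sigma> (x * y) = \<sigma> x * \<sigma> y)}"

definition totally_real :: "complex set \<Rightarrow> bool" where
  "totally_real L \<longleftrightarrow> (\<forall>\<sigma>\<in>embeddings L. \<sigma> ` L \<subseteq> \<real>)"

text \<open>Galois over Q (characteristic 0): normal, i.e. every embedding maps L onto L.\<close>
definition galois_over_Q :: "complex set \<Rightarrow> bool" where
  "galois_over_Q L \<longleftrightarrow> (\<forall>\<sigma>\<in>embeddings L. \<sigma> ` L = L)"

definition Gal :: "complex set \<Rightarrow> (complex \<Rightarrow> complex) monoid" where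
  "Gal L = \<lparr>carrier = {\<sigma>\<in>embeddings L. \<sigma> ` L = L},
            monoid.mult = (\<lambda>\<sigma> \<tau>. compose L \<sigma> \<tau>),
            one = restrict id L\<rparr>"

definition Z2_power :: "nat \<Rightarrow> (nat \<Rightarrow> int) monoid" where
  "Z2_power n = product_group {..<n} (\<lambda>_. integer_mod_group 2)"

text \<open>Archimedean places: the absolute values x \<mapsto> |\<sigma> x| on L induced by the
embeddings (two embeddings give the same place iff they are complex conjugate).\<close>
definition place_of :: "complex set \<Rightarrow> (complex \<Rightarrow> complex) \<Rightarrow> (complex \<Rightarrow> real)" where
  "place_of L \<sigma> = (\<lambda>x\<in>L. cmod (\<sigma> x))"

definition arch_places :: "complex set \<Rightarrow> (complex \<Rightarrow> real) set" where
  "arch_places L = place_of L ` embeddings L"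

definition real_place :: "complex set \<Rightarrow> (complex \<Rightarrow> real) \<Rightarrow> bool" where
  "real_place L v \<longleftrightarrow> (\<exists>\<sigma>\<in>embeddings L. v = place_of L \<sigma> \<and> \<sigma> ` L \<subseteq> \<real>)"

definition e_place :: "complex set \<Rightarrow> (complex \<Rightarrow> real) \<Rightarrow> real" where
  "e_place L v = (if real_place L v then 1 else 2)"

definition units :: "complex set \<Rightarrow> complex set" where
  "units L = {\<gamma>\<in>L. \<gamma> \<noteq> 0 \<and> algebraic_int \<gamma> \<and> algebraic_int (inverse \<gamma>)}"

definition LOG :: "complex set \<Rightarrow> complex \<Rightarrow> ((complex \<Rightarrow> real) \<Rightarrow> real)" where
  "LOG L \<gamma> = (\<lambda>v. if v \<in> arch_places L then e_place L v * ln (v \<gamma>) else 0)"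

text \<open>Elements of the second exterior power of R^A are represented by their
antisymmetric coefficient functions on ordered pairs of places:
  w = \<Sum>_{v1<v2} w(v1,v2) \<delta>^{v1}\<wedge>\<delta>^{v2} for any ordering; zero outside A\<times>A.\<close>
definition wedge2 :: "complex set \<Rightarrow> ((complex \<Rightarrow> real) \<Rightarrow> real) \<Rightarrow> ((complex \<Rightarrow> real) \<Rightarrow> real)
      \<Rightarrow> ((complex \<Rightarrow> real) \<times> (complex \<Rightarrow> real) \<Rightarrow> real)" where
  "wedge2 L a b = (\<lambda>(v1, v2). if v1 \<in> arch_places L \<and> v2 \<in> arch_places L
                               then a v1 * b v2 - a v2 * b v1 else 0)"

inductive_set wedge2_LOG_units ::
    "complex set \<Rightarrow> ((complex \<Rightarrow> real) \<times> (complex \<Rightarrow> real) \<Rightarrow> real) set" for L where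
  zero: "(\<lambda>_. 0) \<in> wedge2_LOG_units L"
| gen: "\<epsilon>1 \<in> units L \<Longrightarrow> \<epsilon>2 \<in> units L \<Longrightarrow> wedge2 L (LOG L \<epsilon>1) (LOG L \<epsilon>2) \<in> wedge2_LOG_units L"
| diff: "x \<in> wedge2_LOG_units L \<Longrightarrow> y \<in> wedge2_LOG_units L \<Longrightarrow> (\<lambda>p. x p - y p) \<in> wedge2_LOG_units L"

text \<open>The l1 norm \<Sum>_I |c_I| over 2-element subsets I = {v1,v2}: each unordered pair
appears twice among ordered pairs (with coefficients of opposite sign), hence 1/2.\<close>
definition norm1_wedge2 :: "complex set \<Rightarrow> ((complex \<Rightarrow> real) \<times> (complex \<Rightarrow> real) \<Rightarrow> real) \<Rightarrow> real" where
  "norm1_wedge2 L w = (1/2) * (\<Sum>p\<in>{(v1, v2). v1 \<in> arch_places L \<and> v2 \<in> arch_places L \<and> v1 \<noteq> v2}. \<bar>w p\<bar>)"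

end

theory Submission
  imports Defs "Jordan_Normal_Form.Char_Poly"
begin

text \<open>
  Let \<open>G = Gal(L/\<rat>) \<cong> (\<int>/2)\<^sup>n\<close>. For characters \<open>\<chi>, \<psi>\<close> of \<open>G\<close> pair \<open>w\<close> with \<open>\<chi> \<otimes> \<psi>\<close>,
  i.e. form \<open>\<Sum>\<^sub>\<sigma>\<^sub>,\<^sub>\<tau> w(\<sigma>,\<tau>) \<chi>(\<sigma>) \<psi>(\<tau>)\<close>. By Fourier inversion on \<open>G\<close> some pairing is nonzero,
  and every pairing is at most \<open>2 \<parallel>w\<parallel>\<^sub>1\<close> in absolute value. On a generator
  \<open>LOG \<epsilon> \<and> LOG \<eta>\<close> the pairing is \<open>A\<^sub>\<chi>(\<epsilon>) A\<^sub>\<psi>(\<eta>) - A\<^sub>\<chi>(\<eta>) A\<^sub>\<psi>(\<epsilon>)\<close>, where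
  \<open>A\<^sub>\<chi>(\<epsilon>) = \<Sum>\<^sub>\<sigma> \<chi>(\<sigma>) log |\<sigma> \<epsilon>|\<close>.

  The product \<open>u\<close> of the conjugates \<open>\<sigma> \<epsilon>\<close> with \<open>\<chi>(\<sigma>) = 1\<close> satisfies \<open>A\<^sub>\<chi>(\<epsilon>) = 2 log |u|\<close>, and
  together with the complementary product it is the pair of roots of some \<open>x\<^sup>2 - s x \<plusminus> 1\<close>
  with \<open>s \<in> \<int>\<close>. Hence nonzero values of \<open>A\<^sub>\<chi>\<close> are at least \<open>2 log \<phi>\<close> in absolute value, so
  \<open>A\<^sub>\<chi>(\<O>\<^sup>*) = \<int> c\<^sub>\<chi>\<close> and every pairing lies in \<open>\<int> c\<^sub>\<chi> c\<^sub>\<psi>\<close>. If \<open>c\<^sub>\<chi> < 2 log(1 + \<surd>2)\<close> the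
  quadratic must be \<open>x\<^sup>2 - x - 1\<close> (up to sign), which puts \<open>\<surd>5\<close> into \<open>L\<close> with stabiliser
  \<open>ker \<chi>\<close>. So two characters with small generators coincide, and then the pairing vanishes
  by antisymmetry of \<open>w\<close>. A nonzero pairing is therefore at least
  \<open>2 log \<phi> \<cdot> 2 log(1 + \<surd>2)\<close>.
\<close>

section \<open>Closure of the algebraic integers\<close>

lemma algebraic_int_if_int_matrix_eigenvalue:
  fixes x :: complex and v :: "nat \<Rightarrow> complex" and a :: "nat \<Rightarrow> nat \<Rightarrow> int"
  assumes "i0 < k" "v i0 \<noteq> 0" "\<forall>i<k. x * v i = (\<Sum>j<k. of_int (a i j) * v j)"
  shows "algebraic_int x"
proof -
  define A :: "int mat" where "A = mat k k (\<lambda>(i,j). a i j)"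
  define Ac :: "complex mat" where "Ac = map_mat of_int A"
  define vv where "vv = vec k v"
  have A: "A \<in> carrier_mat k k" unfolding A_def by simp
  have Ac: "Ac \<in> carrier_mat k k" unfolding Ac_def A_def by simp
  have "Ac *\<^sub>v vv = x \<cdot>\<^sub>v vv"
  proof (rule eq_vecI)
    fix i assume "i < dim_vec (x \<cdot>\<^sub>v vv)"
    then have i: "i < k" by (simp add: vv_def)
    have "(Ac *\<^sub>v vv) $ i = (\<Sum>j<k. of_int (a i j) * v j)"
      using i unfolding Ac_def A_def vv_def
      by (simp add: mult_mat_vec_def scalar_prod_def row_def atLeast0LessThan)
    also have "\<dots> = x * v i" using assms(3) i by simp
    finally show "(Ac *\<^sub>v vv) $ i = (x \<cdot>\<^sub>v vv) $ i" using i by (simp add: vv_def)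
  qed (simp add: Ac_def A_def vv_def)
  moreover have "vv \<noteq> 0\<^sub>v k"
  proof
    assume "vv = 0\<^sub>v k"
    then have "vv $ i0 = 0" using assms(1) by simp
    then show False using assms(1,2) by (simp add: vv_def)
  qed
  ultimately have "eigenvector Ac vv x" unfolding eigenvector_def using Ac by (simp add: vv_def)
  then have "eigenvalue Ac x" unfolding eigenvalue_def by blast
  then have root: "poly (char_poly Ac) x = 0" using eigenvalue_root_char_poly[OF Ac] by simp
  have cp: "char_poly Ac = of_int_poly (char_poly A)"
    unfolding Ac_def using of_int_hom.char_poly_hom[OF A] by simp
  have "degree (char_poly A) = k \<and> coeff (char_poly A) k = 1"
    using degree_monic_char_poly[OF A] .
  then show ?thesis
    using root by (intro algebraic_int.intros[of "char_poly Ac"]) (auto simp: cp degree_map_poly coeff_map_poly)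
qed

definition int_span :: "'i set \<Rightarrow> ('i \<Rightarrow> complex) \<Rightarrow> complex set" where
  "int_span I v = {y. \<exists>c. y = (\<Sum>j\<in>I. of_int (c j) * v j)}"

lemma int_span_0: "0 \<in> int_span I v"
  unfolding int_span_def by (rule CollectI, rule exI[of _ "\<lambda>_. 0"]) simp

lemma int_span_add: "y \<in> int_span I v \<Longrightarrow> z \<in> int_span I v \<Longrightarrow> y + z \<in> int_span I v"
proof -
  assume "y \<in> int_span I v" "z \<in> int_span I v"
  then obtain c d where "y = (\<Sum>j\<in>I. of_int (c j) * v j)" "z = (\<Sum>j\<in>I. of_int (d j) * v j)"
    unfolding int_span_def by blast
  then have "y + z = (\<Sum>j\<in>I. of_int (c j + d j) * v j)"
    by (simp add: sum.distrib distrib_right)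
  then show ?thesis unfolding int_span_def mem_Collect_eq by (intro exI[of _ "\<lambda>j. c j + d j"])
qed

lemma int_span_scale: "y \<in> int_span I v \<Longrightarrow> of_int k * y \<in> int_span I v"
proof -
  assume "y \<in> int_span I v"
  then obtain c where "y = (\<Sum>j\<in>I. of_int (c j) * v j)"
    unfolding int_span_def by blast
  then have "of_int k * y = (\<Sum>j\<in>I. of_int (k * c j) * v j)"
    by (simp add: sum_distrib_left mult.assoc)
  then show ?thesis unfolding int_span_def mem_Collect_eq by (intro exI[of _ "\<lambda>j. k * c j"])
qed

lemma int_span_sum:
  "finite A \<Longrightarrow> (\<And>a. a \<in> A \<Longrightarrow> f a \<in> int_span I v) \<Longrightarrow> (\<Sum>a\<in>A. f a) \<in> int_span I v"
  by (induction A rule: finite_induct) (auto intro: int_span_add int_span_0)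

lemma int_span_base:
  assumes "finite I" "i \<in> I" shows "v i \<in> int_span I v"
proof -
  have "(\<Sum>j\<in>I. of_int (if j = i then 1 else 0) * v j) = (\<Sum>j\<in>I. if j = i then v j else 0)"
    by (rule sum.cong) auto
  also have "\<dots> = v i" using assms by (simp add: sum.delta)
  finally show ?thesis
    unfolding int_span_def mem_Collect_eq by (intro exI[of _ "\<lambda>j. if j = i then 1 else 0"]) simp
qed

lemma int_span_mult:
  assumes "y \<in> int_span I v" "z \<in> int_span J u" "finite I" "finite J"
  shows "y * z \<in> int_span (I \<times> J) (\<lambda>(i,j). v i * u j)"
proof -
  obtain c d where "y = (\<Sum>i\<in>I. of_int (c i) * v i)" "z = (\<Sum>j\<in>J. of_int (d j) * u j)"
    using assms unfolding int_span_def by blast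
  then have "y * z = (\<Sum>(i,j)\<in>I \<times> J. of_int (c i * d j) * (v i * u j))"
    by (simp add: sum_product sum.cartesian_product algebra_simps)
  then show ?thesis
    unfolding int_span_def by (auto intro!: exI[of _ "\<lambda>(i,j). c i * d j"] simp: case_prod_unfold)
qed

lemma algebraic_int_if_int_span_stable:
  assumes "finite I" "i0 \<in> I" "v i0 \<noteq> 0" "\<forall>i\<in>I. x * v i \<in> int_span I v"
  shows "algebraic_int x"
proof -
  from assms(4) have "\<forall>i\<in>I. \<exists>c. x * v i = (\<Sum>j\<in>I. of_int (c j) * v j)"
    unfolding int_span_def by blast
  then obtain a where a: "\<forall>i\<in>I. x * v i = (\<Sum>j\<in>I. of_int (a i j) * v j)"
    by metis
  obtain e where e: "bij_betw e {..<card I} I"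
    using assms(1) ex_bij_betw_nat_finite lessThan_atLeast0 by metis
  obtain k0 where k0: "k0 < card I" "e k0 = i0"
    using e assms(2) by (metis bij_betw_iff_bijections lessThan_iff)
  show ?thesis
  proof (rule algebraic_int_if_int_matrix_eigenvalue[of k0 "card I" "v \<circ> e" x "\<lambda>i j. a (e i) (e j)"])
    show "k0 < card I" "(v \<circ> e) k0 \<noteq> 0" using k0 assms(3) by auto
    show "\<forall>i<card I. x * (v \<circ> e) i = (\<Sum>j<card I. of_int (a (e i) (e j)) * (v \<circ> e) j)"
    proof (intro allI impI)
      fix i assume "i < card I"
      then have "e i \<in> I" using e by (auto simp: bij_betw_def)
      then have "x * v (e i) = (\<Sum>j\<in>I. of_int (a (e i) j) * v j)" using a by blast
      also have "\<dots> = (\<Sum>j<card I. of_int (a (e i) (e j)) * v (e j))"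
        using sum.reindex_bij_betw[OF e, of "\<lambda>j. of_int (a (e i) j) * v j"] by simp
      finally show "x * (v \<circ> e) i = (\<Sum>j<card I. of_int (a (e i) (e j)) * (v \<circ> e) j)" by simp
    qed
  qed
qed

lemma algebraic_int_powers_in_int_span:
  assumes "algebraic_int (x::complex)"
  obtains m where "m > 0" "\<And>a. x ^ a \<in> int_span {..<m} (\<lambda>i. x ^ i)"
proof -
  obtain p where p: "lead_coeff p = 1" "\<forall>i. coeff p i \<in> \<int>" "poly p x = 0"
    using assms by (auto elim: algebraic_int.cases)
  define m where "m = degree p"
  have "m > 0"
  proof (rule ccontr)
    assume "\<not> m > 0"
    then have "degree p = 0" by (simp add: m_def)
    then have "p = [:1:]" using p(1) by (metis degree_0_id)
    then show False using p(3) by simp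
  qed
  have xm: "x ^ m = - (\<Sum>i<m. coeff p i * x ^ i)"
  proof -
    have "poly p x = (\<Sum>i\<le>m. coeff p i * x ^ i)" by (simp add: poly_altdef m_def)
    also have "\<dots> = (\<Sum>i<m. coeff p i * x ^ i) + x ^ m"
      using p(1) by (simp add: lessThan_Suc_atMost[symmetric] m_def)
    finally show ?thesis using p(3) by (simp add: eq_neg_iff_add_eq_0 add.commute)
  qed
  have "x ^ a \<in> int_span {..<m} (\<lambda>i. x ^ i)" for a
  proof (induction a rule: less_induct)
    case (less a)
    show ?case
    proof (cases "a < m")
      case True then show ?thesis by (intro int_span_base) auto
    next
      case False
      have "x ^ a = x ^ (a - m) * x ^ m" using False by (simp add: power_add[symmetric])
      also have "\<dots> = (\<Sum>i<m. (- coeff p i) * x ^ (a - m + i))"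
        by (simp add: xm sum_distrib_left power_add sum_negf algebra_simps)
      finally have eq: "x ^ a = (\<Sum>i<m. (- coeff p i) * x ^ (a - m + i))" .
      show ?thesis unfolding eq
      proof (rule int_span_sum)
        fix i assume i: "i \<in> {..<m}"
        obtain c where c: "coeff p i = of_int c" using p(2) by (meson Ints_cases)
        have "x ^ (a - m + i) \<in> int_span {..<m} (\<lambda>i. x ^ i)"
          using i False \<open>m > 0\<close> by (intro less) auto
        then have "of_int (-c) * x ^ (a - m + i) \<in> int_span {..<m} (\<lambda>i. x ^ i)"
          by (rule int_span_scale)
        then show "(- coeff p i) * x ^ (a - m + i) \<in> int_span {..<m} (\<lambda>i. x ^ i)" using c by simp
      qed simp
    qed
  qed
  with \<open>m > 0\<close> show ?thesis using that by blast
qed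

text \<open>Multiplication by \<open>x + y\<close> and by \<open>x y\<close> preserves the finitely generated \<open>\<int>\<close>-module
  spanned by the monomials \<open>x\<^sup>i y\<^sup>j\<close>.\<close>

lemma algebraic_int_plus_times:
  assumes "algebraic_int (x::complex)" "algebraic_int (y::complex)"
  shows "algebraic_int (x + y) \<and> algebraic_int (x * y)"
proof -
  obtain m1 where m1: "m1 > 0" "\<And>a. x ^ a \<in> int_span {..<m1} (\<lambda>i. x ^ i)"
    using algebraic_int_powers_in_int_span[OF assms(1)] by blast
  obtain m2 where m2: "m2 > 0" "\<And>a. y ^ a \<in> int_span {..<m2} (\<lambda>i. y ^ i)"
    using algebraic_int_powers_in_int_span[OF assms(2)] by blast
  define I where "I = {..<m1} \<times> {..<m2}"
  define v where "v = (\<lambda>(i::nat,j::nat). x ^ i * y ^ j)"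
  have mem: "x ^ a * y ^ b \<in> int_span I v" for a b
    using int_span_mult[OF m1(2)[of a] m2(2)[of b]] by (simp add: I_def v_def)
  have fin: "finite I" and i0: "(0,0) \<in> I" and v0: "v (0,0) \<noteq> 0"
    using m1 m2 by (auto simp: I_def v_def)
  have "algebraic_int (x + y)"
  proof (rule algebraic_int_if_int_span_stable[of I "(0,0)" v], fact fin, fact i0, fact v0, intro ballI)
    fix ij assume "ij \<in> I"
    obtain i j where ij: "ij = (i,j)" by fastforce
    have "(x + y) * v ij = x ^ Suc i * y ^ j + x ^ i * y ^ Suc j"
      by (simp add: ij v_def algebra_simps)
    then show "(x + y) * v ij \<in> int_span I v"
      using mem[of "Suc i" j] mem[of i "Suc j"] by (metis int_span_add)
  qed
  moreover have "algebraic_int (x * y)"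
  proof (rule algebraic_int_if_int_span_stable[of I "(0,0)" v], fact fin, fact i0, fact v0, intro ballI)
    fix ij assume "ij \<in> I"
    obtain i j where ij: "ij = (i,j)" by fastforce
    have "(x * y) * v ij = x ^ Suc i * y ^ Suc j"
      by (simp add: ij v_def algebra_simps)
    then show "(x * y) * v ij \<in> int_span I v" using mem[of "Suc i" "Suc j"] by metis
  qed
  ultimately show ?thesis by blast
qed

lemma algebraic_int_plus: "algebraic_int (x::complex) \<Longrightarrow> algebraic_int y \<Longrightarrow> algebraic_int (x + y)"
  and algebraic_int_times: "algebraic_int (x::complex) \<Longrightarrow> algebraic_int y \<Longrightarrow> algebraic_int (x * y)"
  using algebraic_int_plus_times by blast+

lemma algebraic_int_prod:
  "(\<And>a. a \<in> A \<Longrightarrow> algebraic_int (f a :: complex)) \<Longrightarrow> algebraic_int (\<Prod>a\<in>A. f a)"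
  by (induction A rule: infinite_finite_induct) (auto intro: algebraic_int_times)

section \<open>Subfields of the complex numbers and their embeddings\<close>

lemma subfield_C_0: "subfield_C L \<Longrightarrow> 0 \<in> L"
  and subfield_C_1: "subfield_C L \<Longrightarrow> 1 \<in> L"
  and subfield_C_add: "subfield_C L \<Longrightarrow> x \<in> L \<Longrightarrow> y \<in> L \<Longrightarrow> x + y \<in> L"
  and subfield_C_diff: "subfield_C L \<Longrightarrow> x \<in> L \<Longrightarrow> y \<in> L \<Longrightarrow> x - y \<in> L"
  and subfield_C_mult: "subfield_C L \<Longrightarrow> x \<in> L \<Longrightarrow> y \<in> L \<Longrightarrow> x * y \<in> L"
  and subfield_C_inverse: "subfield_C L \<Longrightarrow> x \<in> L \<Longrightarrow> inverse x \<in> L"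
  unfolding subfield_C_def by auto

lemma subfield_C_uminus: "subfield_C L \<Longrightarrow> x \<in> L \<Longrightarrow> - x \<in> L"
  using subfield_C_diff[of L 0 x] subfield_C_0[of L] by simp

lemma subfield_C_power: "subfield_C L \<Longrightarrow> x \<in> L \<Longrightarrow> x ^ k \<in> L"
  by (induction k) (auto intro: subfield_C_mult subfield_C_1)

lemma subfield_C_prod: "subfield_C L \<Longrightarrow> (\<And>a. a \<in> A \<Longrightarrow> f a \<in> L) \<Longrightarrow> (\<Prod>a\<in>A. f a) \<in> L"
  by (induction A rule: infinite_finite_induct) (auto intro: subfield_C_mult subfield_C_1)

lemma subfield_C_of_nat: "subfield_C L \<Longrightarrow> of_nat k \<in> L"
  by (induction k) (auto intro: subfield_C_add subfield_C_0 subfield_C_1)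

lemma subfield_C_of_int: "subfield_C L \<Longrightarrow> of_int k \<in> L"
  by (cases k rule: int_cases2) (auto intro: subfield_C_of_nat subfield_C_uminus)

lemma number_field_subfield_C: "number_field L \<Longrightarrow> subfield_C L"
  unfolding number_field_def by blast

context
  fixes L :: "complex set" and \<sigma> :: "complex \<Rightarrow> complex"
  assumes sf: "subfield_C L" and emb: "\<sigma> \<in> embeddings L"
begin

lemma emb_add: "x \<in> L \<Longrightarrow> y \<in> L \<Longrightarrow> \<sigma> (x + y) = \<sigma> x + \<sigma> y"
  and emb_mult: "x \<in> L \<Longrightarrow> y \<in> L \<Longrightarrow> \<sigma> (x * y) = \<sigma> x * \<sigma> y"
  and emb_1: "\<sigma> 1 = 1"
  using emb unfolding embeddings_def by blast+

lemma emb_0: "\<sigma> 0 = 0"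
  using emb_add[OF subfield_C_0[OF sf] subfield_C_0[OF sf]] by simp

lemma emb_uminus: "x \<in> L \<Longrightarrow> \<sigma> (- x) = - \<sigma> x"
  using emb_add[of x "-x"] subfield_C_uminus[OF sf] emb_0
  by (simp add: add.commute eq_neg_iff_add_eq_0)

lemma emb_diff: "x \<in> L \<Longrightarrow> y \<in> L \<Longrightarrow> \<sigma> (x - y) = \<sigma> x - \<sigma> y"
  using emb_add[of x "-y"] emb_uminus[of y] subfield_C_uminus[OF sf] by simp

lemma emb_of_nat: "\<sigma> (of_nat k) = of_nat k"
  by (induction k) (simp_all add: emb_0 emb_1 emb_add subfield_C_of_nat[OF sf] subfield_C_1[OF sf])

lemma emb_of_int: "\<sigma> (of_int k) = of_int k"
  by (cases k rule: int_cases2) (simp_all add: emb_of_nat emb_uminus subfield_C_of_nat[OF sf])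

lemma emb_inverse: "x \<in> L \<Longrightarrow> \<sigma> (inverse x) = inverse (\<sigma> x)"
proof (cases "x = 0")
  case True then show ?thesis by (simp add: emb_0)
next
  case False
  assume x: "x \<in> L"
  have "\<sigma> x * \<sigma> (inverse x) = 1"
    using emb_mult[OF x subfield_C_inverse[OF sf x]] False emb_1 by simp
  then show ?thesis by (metis inverse_unique)
qed

lemma emb_nonzero: "x \<in> L \<Longrightarrow> x \<noteq> 0 \<Longrightarrow> \<sigma> x \<noteq> 0"
  using emb_inverse[of x] emb_mult[of x "inverse x"] subfield_C_inverse[OF sf] emb_1 by force

lemma emb_prod: "(\<And>a. a \<in> A \<Longrightarrow> f a \<in> L) \<Longrightarrow> \<sigma> (\<Prod>a\<in>A. f a) = (\<Prod>a\<in>A. \<sigma> (f a))"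
proof (induction A rule: infinite_finite_induct)
  case (insert a A)
  then show ?case
    using emb_mult[of "f a" "\<Prod>a\<in>A. f a"] subfield_C_prod[OF sf, of A f] by simp
qed (simp_all add: emb_1)

lemma emb_poly:
  "(\<forall>i. coeff p i \<in> \<int>) \<Longrightarrow> x \<in> L \<Longrightarrow> poly p x \<in> L \<and> \<sigma> (poly p x) = poly p (\<sigma> x)"
proof (induction p)
  case 0 then show ?case by (simp add: emb_0 subfield_C_0[OF sf])
next
  case (pCons a p)
  obtain k where k: "a = of_int k"
    using pCons.prems(1) by (metis coeff_pCons_0 Ints_cases)
  have aL: "a \<in> L" using k subfield_C_of_int[OF sf] by simp
  have "\<forall>i. coeff p i \<in> \<int>" using pCons.prems(1) by (metis coeff_pCons_Suc)
  from pCons.IH[OF this pCons.prems(2)]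
  have IH: "poly p x \<in> L" "\<sigma> (poly p x) = poly p (\<sigma> x)" by auto
  have xp: "x * poly p x \<in> L" using subfield_C_mult[OF sf pCons.prems(2) IH(1)] .
  show ?case
    using aL xp subfield_C_add[OF sf aL xp] emb_add[OF aL xp] emb_mult[OF pCons.prems(2) IH(1)]
      IH(2) emb_of_int k by simp
qed

lemma emb_algebraic_int: "x \<in> L \<Longrightarrow> algebraic_int x \<Longrightarrow> algebraic_int (\<sigma> x)"
proof -
  assume x: "x \<in> L" and "algebraic_int x"
  then obtain p where p: "lead_coeff p = 1" "\<forall>i. coeff p i \<in> \<int>" "poly p x = 0"
    by (auto elim: algebraic_int.cases)
  have "poly p (\<sigma> x) = 0" using emb_poly[OF p(2) x] p(3) emb_0 by simp
  then show ?thesis using p by (intro algebraic_int.intros) auto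
qed

end

section \<open>Elements fixed by all embeddings are rational\<close>

definition rat_scale :: "rat \<Rightarrow> complex \<Rightarrow> complex" where
  "rat_scale r z = of_rat r * z"

interpretation Q: vector_space rat_scale
  by unfold_locales (auto simp: rat_scale_def algebra_simps of_rat_add of_rat_mult)

interpretation QQ: vector_space_pair rat_scale rat_scale ..

lemma number_field_in_finite_span:
  assumes "number_field L"
  obtains B where "finite B" "L \<subseteq> Q.span B"
proof -
  from assms obtain B where B: "finite B" "\<forall>x\<in>L. \<exists>c::complex \<Rightarrow> rat. x = (\<Sum>b\<in>B. of_rat (c b) * b)"
    unfolding number_field_def by blast
  have "L \<subseteq> Q.span B"
  proof
    fix x assume "x \<in> L"
    then obtain c where "x = (\<Sum>b\<in>B. rat_scale (c b) b)" using B(2) by (auto simp: rat_scale_def)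
    then show "x \<in> Q.span B" by (simp add: Q.span_sum Q.span_scale Q.span_base)
  qed
  then show ?thesis using that B by blast
qed

lemma powers_independent:
  assumes "\<forall>k<N. x ^ k \<notin> Q.span ((\<lambda>i. x ^ i) ` {..<k})"
  shows "Q.independent ((\<lambda>i. x ^ i) ` {..<N}) \<and> inj_on (\<lambda>i. x ^ i) {..<N}"
  using assms
proof (induction N)
  case 0 then show ?case using Q.independent_empty by simp
next
  case (Suc N)
  then have IH: "Q.independent ((\<lambda>i. x ^ i) ` {..<N})" "inj_on (\<lambda>i. x ^ i) {..<N}" by simp_all
  have nin: "x ^ N \<notin> Q.span ((\<lambda>i. x ^ i) ` {..<N})" using Suc.prems by simp
  have "Q.independent (insert (x ^ N) ((\<lambda>i. x ^ i) ` {..<N}))"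
    using IH(1) nin by (intro Q.independent_insertI)
  moreover have "inj_on (\<lambda>i. x ^ i) {..<Suc N}"
    unfolding lessThan_Suc using IH(2) nin Q.span_base by (auto simp: inj_on_insert)
  ultimately show ?case by (simp add: lessThan_Suc)
qed

lemma least_power_dependence:
  assumes L: "number_field L" and x: "x \<in> L"
  obtains m c where "m > 0" "x ^ m = (\<Sum>i<m. of_rat (c i) * x ^ i)"
    "Q.independent ((\<lambda>i. x ^ i) ` {..<m})" "inj_on (\<lambda>i. x ^ i) {..<m}"
proof -
  obtain B where B: "finite B" "L \<subseteq> Q.span B" using number_field_in_finite_span[OF L] by blast
  define P where "P = (\<lambda>k. x ^ k \<in> Q.span ((\<lambda>i. x ^ i) ` {..<k}))"
  have ex: "\<exists>k. P k"
  proof (rule ccontr)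
    assume "\<not> (\<exists>k. P k)"
    then have "Q.independent ((\<lambda>i. x ^ i) ` {..<Suc (card B)}) \<and> inj_on (\<lambda>i. x ^ i) {..<Suc (card B)}"
      by (intro powers_independent) (auto simp: P_def)
    moreover have "(\<lambda>i. x ^ i) ` {..<Suc (card B)} \<subseteq> Q.span B"
      using B(2) subfield_C_power[OF number_field_subfield_C[OF L] x] by auto
    ultimately have "card ((\<lambda>i. x ^ i) ` {..<Suc (card B)}) \<le> card B"
      using Q.independent_span_bound[OF B(1)] by blast
    moreover have "card ((\<lambda>i. x ^ i) ` {..<Suc (card B)}) = Suc (card B)"
      using \<open>Q.independent _ \<and> inj_on _ _\<close> by (simp add: card_image)
    ultimately show False by simp
  qed
  define m where "m = (LEAST k. P k)"
  have Pm: "P m" unfolding m_def using ex by (rule LeastI_ex)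
  have nP: "\<forall>k<m. \<not> P k" unfolding m_def using not_less_Least by blast
  have ii: "Q.independent ((\<lambda>i. x ^ i) ` {..<m}) \<and> inj_on (\<lambda>i. x ^ i) {..<m}"
    using nP by (intro powers_independent) (auto simp: P_def)
  have "m > 0"
  proof (rule ccontr)
    assume "\<not> m > 0"
    then have "m = 0" by simp
    then show False using Pm by (simp add: P_def)
  qed
  from Pm obtain u where "x ^ m = (\<Sum>v\<in>(\<lambda>i. x ^ i) ` {..<m}. rat_scale (u v) v)"
    unfolding P_def Q.span_finite[OF finite_imageI[OF finite_lessThan]] by blast
  also have "\<dots> = (\<Sum>i<m. of_rat (u (x ^ i)) * x ^ i)"
    using ii by (simp add: sum.reindex rat_scale_def)
  finally have "x ^ m = (\<Sum>i<m. of_rat (u (x ^ i)) * x ^ i)" .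
  then show ?thesis using ii \<open>m > 0\<close> by (intro that[of m "\<lambda>i. u (x ^ i)"]) auto
qed

lemma monic_rat_poly_with_independent_powers:
  assumes L: "number_field L" and x: "x \<in> L"
  obtains P m where "m > 0" "degree P = m" "lead_coeff P = 1" "\<forall>k. coeff P k \<in> \<rat>"
    "poly P x = 0" "Q.independent ((\<lambda>i. x ^ i) ` {..<m})" "inj_on (\<lambda>i. x ^ i) {..<m}"
proof -
  obtain m c where m: "m > 0" "x ^ m = (\<Sum>i<m. of_rat (c i) * x ^ i)"
    "Q.independent ((\<lambda>i. x ^ i) ` {..<m})" "inj_on (\<lambda>i. x ^ i) {..<m}"
    using least_power_dependence[OF L x] by blast
  define P :: "complex poly" where "P = monom 1 m - (\<Sum>i<m. monom (of_rat (c i)) i)"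
  have cP: "coeff P k = (if k = m then 1 else 0) - (if k < m then of_rat (c k) else 0)" for k
    unfolding P_def by (simp add: coeff_sum coeff_monom sum.delta)
  have "degree P \<le> m" by (rule degree_le) (auto simp: cP)
  moreover have "coeff P m = 1" by (simp add: cP)
  ultimately have dP: "degree P = m" by (metis le_degree le_antisym one_neq_zero)
  have "\<forall>k. coeff P k \<in> \<rat>" by (simp add: cP)
  moreover have "poly P x = 0" using m(2) by (simp add: P_def poly_sum poly_monom)
  moreover have "lead_coeff P = 1" using dP \<open>coeff P m = 1\<close> by simp
  ultimately show ?thesis using that m(1,3,4) dP by blast
qed

definition rat_linear :: "(complex \<Rightarrow> complex) \<Rightarrow> bool" where
  "rat_linear f \<longleftrightarrow> (\<forall>a b. f (a + b) = f a + f b) \<and> (\<forall>r a. f (of_rat r * a) = of_rat r * f a)"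

lemma linear_imp_rat_linear: "Vector_Spaces.linear rat_scale rat_scale f \<Longrightarrow> rat_linear f"
  unfolding rat_linear_def Vector_Spaces.linear_def module_hom_def module_hom_axioms_def
  by (auto simp: rat_scale_def)

lemma rat_linear_0: "rat_linear f \<Longrightarrow> f 0 = 0"
  unfolding rat_linear_def by (metis add_0 add_cancel_right_right)

lemma rat_linear_sum_of_rat:
  "rat_linear f \<Longrightarrow> f (\<Sum>i\<in>A. of_rat (c i) * y i) = (\<Sum>i\<in>A. of_rat (c i) * f (y i))"
  by (induction A rule: infinite_finite_induct) (auto simp: rat_linear_0 rat_linear_def)

lemma rat_linear_sum_Rats:
  "rat_linear f \<Longrightarrow> (\<And>i. i \<in> A \<Longrightarrow> c i \<in> \<rat>) \<Longrightarrow> f (\<Sum>i\<in>A. c i * y i) = (\<Sum>i\<in>A. c i * f (y i))"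
proof (induction A rule: infinite_finite_induct)
  case (insert a A)
  obtain r where "c a = of_rat r" using insert.prems(2) by (meson Rats_cases insertI1)
  then show ?case using insert by (auto simp: rat_linear_def)
qed (auto simp: rat_linear_0)

text \<open>The action of \<open>P(b)\<close> on a functional \<open>f\<close>, where \<open>b\<close> acts by multiplication on the argument.\<close>

definition poly_mult_op :: "complex \<Rightarrow> complex poly \<Rightarrow> (complex \<Rightarrow> complex) \<Rightarrow> complex \<Rightarrow> complex" where
  "poly_mult_op b P f z = (\<Sum>k\<le>degree P. coeff P k * f (b ^ k * z))"

lemma poly_mult_op_bound:
  "degree P \<le> N \<Longrightarrow> poly_mult_op b P f z = (\<Sum>k\<le>N. coeff P k * f (b ^ k * z))"
  unfolding poly_mult_op_def by (rule sum.mono_neutral_left) (auto simp: coeff_eq_0)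

lemma poly_mult_op_rat_linear:
  assumes f: "rat_linear f" shows "rat_linear (poly_mult_op b P f)"
proof -
  have a: "f (b ^ k * (x + y)) = f (b ^ k * x) + f (b ^ k * y)" for k x y
    using f unfolding rat_linear_def by (simp add: distrib_left)
  have s: "f (b ^ k * (of_rat r * x)) = of_rat r * f (b ^ k * x)" for k x r
  proof -
    have "b ^ k * (of_rat r * x) = of_rat r * (b ^ k * x)" by (simp add: algebra_simps)
    then show ?thesis using f unfolding rat_linear_def by metis
  qed
  show ?thesis unfolding rat_linear_def poly_mult_op_def
    by (simp only: a s) (simp add: sum.distrib distrib_left sum_distrib_left mult.left_commute)
qed

lemma poly_mult_op_1: "poly_mult_op b 1 f z = f z"
  by (simp add: poly_mult_op_def)

lemma poly_mult_op_linear_factor: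
  "poly_mult_op b ([:-r, 1:] * P) f z = poly_mult_op b P f (b * z) - r * poly_mult_op b P f z"
proof -
  define D where "D = degree P"
  have d: "degree ([:-r, 1:] * P) \<le> Suc D"
    using degree_mult_le[of "[:-r,1:]" P] by (simp add: D_def)
  have c: "coeff ([:-r, 1:] * P) k = (case k of 0 \<Rightarrow> 0 | Suc j \<Rightarrow> coeff P j) - r * coeff P k" for k
    by (cases k) (simp_all add: mult_pCons_left)
  have "poly_mult_op b ([:-r, 1:] * P) f z = (\<Sum>k\<le>Suc D. coeff ([:-r, 1:] * P) k * f (b ^ k * z))"
    by (rule poly_mult_op_bound[OF d])
  also have "\<dots> = (\<Sum>k\<le>Suc D. (case k of 0 \<Rightarrow> 0 | Suc j \<Rightarrow> coeff P j) * f (b ^ k * z))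
                  - r * (\<Sum>k\<le>Suc D. coeff P k * f (b ^ k * z))"
    by (simp only: c left_diff_distrib mult.assoc sum_subtractf sum_distrib_left)
  also have "(\<Sum>k\<le>Suc D. (case k of 0 \<Rightarrow> 0 | Suc j \<Rightarrow> coeff P j) * f (b ^ k * z))
      = poly_mult_op b P f (b * z)"
    by (subst sum.atMost_Suc_shift) (simp add: poly_mult_op_def D_def mult_ac)
  also have "(\<Sum>k\<le>Suc D. coeff P k * f (b ^ k * z)) = poly_mult_op b P f z"
    by (rule poly_mult_op_bound[symmetric]) (simp add: D_def)
  finally show ?thesis .
qed

lemma poly_mult_op_rat_poly:
  assumes "rat_linear f" "\<forall>k. coeff P k \<in> \<rat>"
  shows "poly_mult_op b P f z = f (poly P b * z)"
proof -
  have "poly P b * z = (\<Sum>k\<le>degree P. coeff P k * (b ^ k * z))"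
    by (simp add: poly_altdef sum_distrib_right mult.assoc)
  then show ?thesis unfolding poly_mult_op_def
    using rat_linear_sum_Rats[OF assms(1), of "{..degree P}" "coeff P" "\<lambda>k. b ^ k * z"] assms(2) by simp
qed

text \<open>A common eigenvector of the transposed multiplication operators. A nonzero one for a
  spanning set of \<open>y\<close>'s is an embedding up to scaling.\<close>

definition eigenfunctional :: "complex set \<Rightarrow> (complex \<times> complex) list \<Rightarrow> (complex \<Rightarrow> complex) \<Rightarrow> bool" where
  "eigenfunctional L C f \<longleftrightarrow> rat_linear f \<and> (\<forall>(y,l)\<in>set C. \<forall>z\<in>L. f (y * z) = l * f z)"

lemma eigenfunctional_poly_mult_op:
  assumes sf: "subfield_C L" and b: "b \<in> L" and E: "eigenfunctional L C f"
  shows "eigenfunctional L C (poly_mult_op b P f)"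
proof -
  have "poly_mult_op b P f (y * z) = l * poly_mult_op b P f z" if "(y,l) \<in> set C" "z \<in> L" for y l z
  proof -
    have "f (y * (b ^ k * z)) = l * f (b ^ k * z)" for k
      using E that subfield_C_mult[OF sf subfield_C_power[OF sf b] that(2)]
      unfolding eigenfunctional_def by auto
    then show ?thesis unfolding poly_mult_op_def by (simp add: sum_distrib_left algebra_simps)
  qed
  then show ?thesis using poly_mult_op_rat_linear E unfolding eigenfunctional_def by auto
qed

lemma eigenfunctional_extend_mset:
  assumes sf: "subfield_C L" and b: "b \<in> L" and E: "eigenfunctional L C f" and nz: "\<exists>z\<in>L. f z \<noteq> 0"
  shows "(\<forall>z\<in>L. poly_mult_op b (\<Prod>r\<in>#M. [:-r, 1:]) f z = 0) \<Longrightarrow>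
    \<exists>r g. eigenfunctional L ((b,r)#C) g \<and> (\<exists>z\<in>L. g z \<noteq> 0)"
proof (induction M)
  case empty
  then show ?case using nz by (simp add: poly_mult_op_1)
next
  case (add r M)
  define g where "g = poly_mult_op b (\<Prod>r\<in>#M. [:-r, 1:]) f"
  show ?case
  proof (cases "\<exists>z\<in>L. g z \<noteq> 0")
    case True
    have "\<forall>z\<in>L. g (b * z) = r * g z"
    proof
      fix z assume "z \<in> L"
      then have "poly_mult_op b ([:-r, 1:] * (\<Prod>r\<in>#M. [:-r, 1:])) f z = 0" using add.prems by simp
      then show "g (b * z) = r * g z" unfolding poly_mult_op_linear_factor g_def by simp
    qed
    then have "eigenfunctional L ((b,r)#C) g"
      using eigenfunctional_poly_mult_op[OF sf b E] unfolding eigenfunctional_def g_def by auto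
    then show ?thesis using True by blast
  next
    case False
    then show ?thesis using add.IH unfolding g_def by blast
  qed
qed

lemma eigenfunctional_extend:
  assumes L: "number_field L" and b: "b \<in> L" and E: "eigenfunctional L C f" and nz: "\<exists>z\<in>L. f z \<noteq> 0"
  shows "\<exists>r g. eigenfunctional L ((b,r)#C) g \<and> (\<exists>z\<in>L. g z \<noteq> 0)"
proof -
  obtain P m where P: "lead_coeff P = 1" "\<forall>k. coeff P k \<in> \<rat>" "poly P b = 0"
    using monic_rat_poly_with_independent_powers[OF L b] by blast
  have lin: "rat_linear f" using E unfolding eigenfunctional_def by blast
  have "poly_mult_op b (\<Prod>r\<in>#proots P. [:-r, 1:]) f z = 0" for z
    using poly_mult_op_rat_poly[OF lin P(2)] P(3) rat_linear_0[OF lin]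
      complex_poly_decompose_multiset[of P] P(1) by simp
  then show ?thesis
    using eigenfunctional_extend_mset[OF number_field_subfield_C[OF L] b E nz] by blast
qed

lemma eigenfunctional_extend_list:
  assumes L: "number_field L"
  shows "set bs \<subseteq> L \<Longrightarrow> eigenfunctional L C f \<Longrightarrow> (\<exists>z\<in>L. f z \<noteq> 0) \<Longrightarrow>
    \<exists>C' g. eigenfunctional L C' g \<and> (\<exists>z\<in>L. g z \<noteq> 0) \<and> set C \<subseteq> set C' \<and>
      (\<forall>b\<in>set bs. \<exists>l. (b,l) \<in> set C')"
proof (induction bs arbitrary: C f)
  case Nil
  then show ?case by (intro exI[of _ C] exI[of _ f]) auto
next
  case (Cons b bs)
  have "b \<in> L" using Cons.prems(1) by simp
  obtain r g where g: "eigenfunctional L ((b,r)#C) g" "\<exists>z\<in>L. g z \<noteq> 0"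
    using eigenfunctional_extend[OF L \<open>b \<in> L\<close> Cons.prems(2,3)] by blast
  obtain C' h where "eigenfunctional L C' h" "\<exists>z\<in>L. h z \<noteq> 0" "set ((b,r)#C) \<subseteq> set C'"
    "\<forall>b\<in>set bs. \<exists>l. (b,l) \<in> set C'"
    using Cons.IH[OF _ g] Cons.prems(1) by auto
  then show ?case by fastforce
qed

lemma coeff_linear_power_subleading: "coeff ([:a, 1:] ^ Suc k) k = of_nat (Suc k) * (a :: complex)"
proof (induction k)
  case (Suc k)
  have "coeff ([:a, 1:] ^ Suc (Suc k)) (Suc k)
      = a * coeff ([:a, 1:] ^ Suc k) (Suc k) + coeff ([:a, 1:] ^ Suc k) k"
    by (simp only: power_Suc[of _ "Suc k"] mult_pCons_left) simp
  then show ?case using Suc coeff_linear_power[of a "Suc k"] by (simp add: algebra_simps)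
qed simp

lemma monic_rat_poly_other_root:
  fixes P :: "complex poly"
  assumes P: "lead_coeff P = 1" "degree P > 0" "\<forall>k. coeff P k \<in> \<rat>" and x: "x \<notin> \<rat>"
  obtains \<mu> where "\<mu> \<in># proots P" "\<mu> \<noteq> x"
proof (rule ccontr)
  assume "\<not> thesis"
  then have "set_mset (proots P) \<subseteq> {x}" using that by blast
  then have "proots P = replicate_mset (degree P) x"
    using set_mset_subset_singletonD[of "proots P" x] by (simp add: size_proots_complex)
  then have "P = [:-x, 1:] ^ degree P"
    using complex_poly_decompose_multiset[of P] P(1) by simp
  then have "coeff P (degree P - 1) = of_nat (degree P) * (- x)"
    using coeff_linear_power_subleading[of "-x" "degree P - 1"] P(2) by simp
  then have "x = - coeff P (degree P - 1) / of_nat (degree P)"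
    using P(2) by (simp add: field_simps)
  then have "x \<in> \<rat>" using P(3) by (simp add: Rats_divide Rats_minus_iff)
  then show False using x by simp
qed

text \<open>Dividing the minimal polynomial of \<open>x\<close> by \<open>X - \<mu>\<close> and applying the result to a functional
  dual to the power basis \<open>1, x, \<dots>, x\<^sup>m\<^sup>-\<^sup>1\<close> gives an eigenfunctional that is nonzero at \<open>1\<close>.\<close>

lemma eigenfunctional_other_root:
  assumes L: "number_field L" and x: "x \<in> L" and nq: "x \<notin> \<rat>"
  obtains \<mu> g where "\<mu> \<noteq> x" "eigenfunctional L [(x,\<mu>)] g" "g 1 = 1"
proof -
  obtain P m where P: "m > 0" "degree P = m" "lead_coeff P = 1" "\<forall>k. coeff P k \<in> \<rat>" "poly P x = 0"
    "Q.independent ((\<lambda>i. x ^ i) ` {..<m})" "inj_on (\<lambda>i. x ^ i) {..<m}"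
    by (rule monic_rat_poly_with_independent_powers[OF L x])
  obtain \<mu> where mu: "\<mu> \<in># proots P" "\<mu> \<noteq> x"
  proof (rule monic_rat_poly_other_root[OF P(3) _ P(4) nq])
    show "degree P > 0" using P(1,2) by simp
  qed
  define Qp where "Qp = (\<Prod>r\<in>#proots P - {#\<mu>#}. [:-r, 1:])"
  have roots: "proots P = add_mset \<mu> (proots P - {#\<mu>#})" using mu(1) by (simp add: insert_DiffM)
  have "P = (\<Prod>r\<in>#proots P. [:-r, 1:])" using complex_poly_decompose_multiset[of P] P(3) by simp
  also have "\<dots> = [:-\<mu>, 1:] * Qp" unfolding Qp_def by (subst roots) simp
  finally have PQ: "P = [:-\<mu>, 1:] * Qp" .
  have "lead_coeff P = lead_coeff [:-\<mu>, 1:] * lead_coeff Qp" unfolding PQ by (rule lead_coeff_mult)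
  then have lQ: "lead_coeff Qp = 1" using P(3) by simp
  then have "degree P = degree [:-\<mu>, 1:] + degree Qp" unfolding PQ by (intro degree_mult_eq) auto
  then have dQ: "degree Qp = m - 1" using P(2) by simp
  obtain g0 where g0: "Vector_Spaces.linear rat_scale rat_scale g0"
    "\<forall>v\<in>(\<lambda>i. x ^ i) ` {..<m}. g0 v = (if v = x ^ (m - 1) then 1 else 0)"
    using QQ.linear_independent_extend[OF P(6), of "\<lambda>v. if v = x ^ (m - 1) then 1 else 0"] by blast
  have lg0: "rat_linear g0" using g0(1) by (rule linear_imp_rat_linear)
  define g where "g = poly_mult_op x Qp g0"
  have "g 1 = (\<Sum>k\<le>m - 1. coeff Qp k * (if k = m - 1 then 1 else 0))"
    unfolding g_def poly_mult_op_def dQ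
  proof (rule sum.cong[OF refl])
    fix k assume "k \<in> {..m - 1}"
    then have km: "k < m" using P(1) by auto
    have "g0 (x ^ k) = (if x ^ k = x ^ (m - 1) then 1 else 0)" using g0(2) km by auto
    also have "(x ^ k = x ^ (m - 1)) = (k = m - 1)"
      using P(7) km P(1) by (auto dest: inj_onD)
    finally show "coeff Qp k * g0 (x ^ k * 1) = coeff Qp k * (if k = m - 1 then 1 else 0)" by simp
  qed
  also have "\<dots> = 1" using lQ dQ by (simp add: if_distrib cong: if_cong)
  finally have "g 1 = 1" .
  moreover have "\<forall>z\<in>L. g (x * z) = \<mu> * g z"
  proof
    fix z assume "z \<in> L"
    have "poly_mult_op x P g0 z = 0"
      using poly_mult_op_rat_poly[OF lg0 P(4)] P(5) rat_linear_0[OF lg0] by simp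
    then show "g (x * z) = \<mu> * g z" unfolding PQ poly_mult_op_linear_factor g_def by simp
  qed
  then have "eigenfunctional L [(x,\<mu>)] g"
    unfolding eigenfunctional_def g_def using poly_mult_op_rat_linear[OF lg0] by simp
  ultimately show ?thesis by (intro that[OF mu(2)])
qed

lemma embedding_of_eigenfunctional:
  assumes sf: "subfield_C L" and lg: "rat_linear g" and nz: "\<exists>z\<in>L. g z \<noteq> 0"
    and eig: "\<And>y. y \<in> L \<Longrightarrow> \<exists>l. \<forall>z\<in>L. g (y * z) = l * g z"
  shows "g 1 \<noteq> 0" and "restrict (\<lambda>y. g y / g 1) L \<in> embeddings L"
proof -
  have eig1: "g (y * z) = g y / g 1 * g z" if "y \<in> L" "z \<in> L" "g 1 \<noteq> 0" for y z
  proof -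
    obtain l where l: "\<forall>z\<in>L. g (y * z) = l * g z" using eig[OF \<open>y \<in> L\<close>] by blast
    then have "g y = l * g 1" using subfield_C_1[OF sf] by (metis mult_1_right)
    then show ?thesis using l that by simp
  qed
  show g1: "g 1 \<noteq> 0"
  proof
    assume g10: "g 1 = 0"
    have "g y = 0" if "y \<in> L" for y
      using eig[OF that] subfield_C_1[OF sf] g10 by (metis mult_1_right mult_zero_right)
    then show False using nz by blast
  qed
  show "restrict (\<lambda>y. g y / g 1) L \<in> embeddings L"
    unfolding embeddings_def
  proof (intro CollectI conjI ballI)
    fix a b assume a: "a \<in> L" and b: "b \<in> L"
    show "restrict (\<lambda>y. g y / g 1) L (a + b) = restrict (\<lambda>y. g y / g 1) L a + restrict (\<lambda>y. g y / g 1) L b"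
      using a b subfield_C_add[OF sf a b] lg by (simp add: rat_linear_def add_divide_distrib)
    show "restrict (\<lambda>y. g y / g 1) L (a * b) = restrict (\<lambda>y. g y / g 1) L a * restrict (\<lambda>y. g y / g 1) L b"
      using a b subfield_C_mult[OF sf a b] eig1[OF a b g1] by simp
  qed (use subfield_C_1[OF sf] g1 in simp_all)
qed

lemma embedding_moves_irrational:
  assumes L: "number_field L" and x: "x \<in> L" and nq: "x \<notin> \<rat>"
  shows "\<exists>\<sigma>\<in>embeddings L. \<sigma> x \<noteq> x"
proof -
  have sf: "subfield_C L" using number_field_subfield_C[OF L] .
  from L obtain B where B: "finite B" "B \<subseteq> L"
    "\<forall>y\<in>L. \<exists>c::complex \<Rightarrow> rat. y = (\<Sum>b\<in>B. of_rat (c b) * b)"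
    unfolding number_field_def by blast
  obtain bs where bs: "set bs = B" using finite_list[OF B(1)] by blast
  obtain \<mu> g0 where g0: "\<mu> \<noteq> x" "eigenfunctional L [(x,\<mu>)] g0" "g0 1 = 1"
    using eigenfunctional_other_root[OF L x nq] by blast
  obtain C g where g: "eigenfunctional L C g" "\<exists>z\<in>L. g z \<noteq> 0" "(x,\<mu>) \<in> set C"
      "\<forall>b\<in>B. \<exists>l. (b,l) \<in> set C"
    using eigenfunctional_extend_list[OF L _ g0(2), of bs] bs B(2) g0(3) subfield_C_1[OF sf]
    by fastforce
  from g(4) obtain lam where lam: "\<forall>b\<in>B. (b, lam b) \<in> set C" by metis
  have lg: "rat_linear g" and eig: "\<And>y l z. (y,l) \<in> set C \<Longrightarrow> z \<in> L \<Longrightarrow> g (y * z) = l * g z"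
    using g(1) unfolding eigenfunctional_def by auto
  have eigL: "\<exists>l. \<forall>z\<in>L. g (y * z) = l * g z" if "y \<in> L" for y
  proof -
    obtain c where c: "y = (\<Sum>b\<in>B. of_rat (c b) * b)" using B(3) \<open>y \<in> L\<close> by blast
    have "g (y * z) = (\<Sum>b\<in>B. of_rat (c b) * lam b) * g z" if "z \<in> L" for z
    proof -
      have "g (y * z) = (\<Sum>b\<in>B. of_rat (c b) * g (b * z))"
        using rat_linear_sum_of_rat[OF lg, of c "\<lambda>b. b * z" B]
        unfolding c by (simp add: sum_distrib_right mult.assoc)
      also have "\<dots> = (\<Sum>b\<in>B. of_rat (c b) * (lam b * g z))"
        using eig lam that by (intro sum.cong) auto
      also have "\<dots> = (\<Sum>b\<in>B. of_rat (c b) * lam b) * g z"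
        by (simp add: sum_distrib_right mult.assoc)
      finally show ?thesis .
    qed
    then show ?thesis by blast
  qed
  have \<sigma>: "g 1 \<noteq> 0" "restrict (\<lambda>y. g y / g 1) L \<in> embeddings L"
    using embedding_of_eigenfunctional[OF sf lg g(2)] eigL by blast+
  have "g x = \<mu> * g 1" using eig[OF g(3) subfield_C_1[OF sf]] by simp
  then have "restrict (\<lambda>y. g y / g 1) L x = \<mu>" using x \<sigma>(1) by simp
  then show ?thesis using \<sigma>(2) g0(1) by (intro bexI[of _ "restrict (\<lambda>y. g y / g 1) L"]) simp_all
qed

lemma fixed_by_embeddings_imp_int:
  assumes "number_field L" "x \<in> L" "\<forall>\<sigma>\<in>embeddings L. \<sigma> x = x" "algebraic_int x"
  shows "x \<in> \<int>"
  using embedding_moves_irrational[OF assms(1,2)] assms(3) rational_algebraic_int_is_int[OF assms(4)]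
  by blast

section \<open>Roots of \<open>x\<^sup>2 - s x \<plusminus> 1\<close>\<close>

lemma ge_root_of_quadratic:
  fixes u r a c :: real
  assumes "r\<^sup>2 = a * r + c" "u\<^sup>2 \<ge> a * u + c" "u + r > a"
  shows "u \<ge> r"
proof -
  have "(u - r) * (u + r - a) = u\<^sup>2 - a * u - (r\<^sup>2 - a * r)"
    by (simp add: algebra_simps power2_eq_square)
  then have "(u - r) * (u + r - a) \<ge> 0" using assms(1,2) by simp
  then show ?thesis using assms(3) by (simp add: zero_le_mult_iff)
qed

lemma sqrt5_bounds: "2 \<le> sqrt (5::real)" "sqrt (5::real) \<le> 3"
  by (rule real_le_rsqrt, simp) (rule real_le_lsqrt, simp_all)

lemma sqrt2_bounds: "1 \<le> sqrt (2::real)" "sqrt (2::real) \<le> 3 / 2"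
  by (rule real_le_rsqrt, simp) (rule real_le_lsqrt, simp_all add: power2_eq_square)

lemma unit_root_trace_ge:
  fixes u s p :: real
  assumes u: "u > 1" and s: "s \<in> \<int>" and p: "p = 1 \<or> p = -1" and eq: "u\<^sup>2 - s * u + p = 0"
  shows "s \<ge> 2 + p"
proof -
  obtain k where k: "s = of_int k" using s by (auto elim: Ints_cases)
  have su: "s * u = u\<^sup>2 + p" using eq by simp
  from p show ?thesis
  proof
    assume p1: "p = 1"
    have "(u - 1)\<^sup>2 > 0" using u by simp
    then have "s * u > 2 * u" using su p1 by (simp add: power2_eq_square algebra_simps)
    then have "k > 2" using u k by simp
    then show ?thesis using k p1 by simp
  next
    assume p1: "p = -1"
    have "u\<^sup>2 > 1" using u by (simp add: power2_eq_square less_1_mult)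
    then have "s * u > 0" using su p1 by simp
    then have "k > 0" using u k by (simp add: zero_less_mult_iff)
    then show ?thesis using k p1 by simp
  qed
qed

lemma unit_root_ge_golden_ratio:
  fixes u s p :: real
  assumes u: "u > 1" and s: "s \<in> \<int>" and p: "p = 1 \<or> p = -1" and eq: "u\<^sup>2 - s * u + p = 0"
  shows "u \<ge> (1 + sqrt 5) / 2"
proof (rule ge_root_of_quadratic[where a = 1 and c = 1])
  have "s * u \<ge> (2 + p) * u" using unit_root_trace_ge[OF assms] u by (simp add: mult_right_mono)
  moreover have "(2 + p) * u - p \<ge> u + 1" using p u by auto
  ultimately show "u\<^sup>2 \<ge> 1 * u + 1" using eq by linarith
  show "((1 + sqrt 5) / 2)\<^sup>2 = 1 * ((1 + sqrt 5) / 2) + 1"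
    by (simp add: power2_eq_square algebra_simps add_divide_distrib)
  have "(1 + sqrt 5) / 2 > (0::real)" by (simp add: add_pos_nonneg)
  then show "u + (1 + sqrt 5) / 2 > 1" using u by linarith
qed

lemma unit_root_lt_silver_ratio:
  fixes u s p :: real
  assumes u: "u > 1" "u < 1 + sqrt 2" and s: "s \<in> \<int>" and p: "p = 1 \<or> p = -1"
    and eq: "u\<^sup>2 - s * u + p = 0"
  shows "s\<^sup>2 - 4 * p = 5"
proof -
  obtain k where k: "s = of_int k" using s by (auto elim: Ints_cases)
  have tr: "s \<ge> 2 + p" using unit_root_trace_ge[OF u(1) s p eq] .
  have big: "u\<^sup>2 \<ge> 2 * u + 1 \<Longrightarrow> False"
    using ge_root_of_quadratic[of "1 + sqrt 2" 2 1 u] u by (simp add: power2_eq_square algebra_simps)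
  from p show ?thesis
  proof
    assume p1: "p = 1"
    have "s * u \<ge> 3 * u" using tr p1 u by (simp add: mult_right_mono)
    then have "u\<^sup>2 \<ge> 3 * u + (-1)" using eq p1 by simp
    then have "u \<ge> (3 + sqrt 5) / 2"
      by (rule ge_root_of_quadratic[rotated])
        (use u sqrt5_bounds in \<open>simp_all add: power2_eq_square algebra_simps add_divide_distrib\<close>)
    then show ?thesis using u sqrt5_bounds sqrt2_bounds by simp
  next
    assume p1: "p = -1"
    have "k < 2"
    proof (rule ccontr)
      assume "\<not> k < 2"
      then have "s * u \<ge> 2 * u" using k u by (simp add: mult_right_mono)
      then show False using big eq p1 by simp
    qed
    then have "k = 1" using tr k p1 by simp
    then show ?thesis using k p1 by simp
  qed
qed

lemma unit_root_abs_gt_1: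
  fixes u s p :: real
  assumes u: "\<bar>u\<bar> > 1" and s: "s \<in> \<int>" and p: "p = 1 \<or> p = -1" and eq: "u\<^sup>2 - s * u + p = 0"
  shows "\<bar>u\<bar> \<ge> (1 + sqrt 5) / 2" and "\<bar>u\<bar> < 1 + sqrt 2 \<Longrightarrow> s\<^sup>2 - 4 * p = 5"
proof -
  have "1 < \<bar>u\<bar> * \<bar>u\<bar>" using less_1_mult[OF u u] .
  then have "u\<^sup>2 > 1" by (simp add: power2_eq_square)
  moreover have "p \<ge> -1" using p by auto
  ultimately have "s * u > 0" using eq by linarith
  then have "\<bar>s\<bar> * \<bar>u\<bar> = s * u" by (simp add: abs_mult[symmetric])
  then have eq': "\<bar>u\<bar>\<^sup>2 - \<bar>s\<bar> * \<bar>u\<bar> + p = 0" using eq by simp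
  have s': "\<bar>s\<bar> \<in> \<int>" using s by simp
  show "\<bar>u\<bar> \<ge> (1 + sqrt 5) / 2" using unit_root_ge_golden_ratio[OF u s' p eq'] .
  show "s\<^sup>2 - 4 * p = 5" if "\<bar>u\<bar> < 1 + sqrt 2"
    using unit_root_lt_silver_ratio[OF u that s' p eq'] by simp
qed

text \<open>For \<open>|u| < 1\<close> pass to the other root \<open>p / u\<close>.\<close>

lemma unit_root_ln_abs:
  fixes u s p :: real
  assumes u: "u \<noteq> 0" and s: "s \<in> \<int>" and p: "p = 1 \<or> p = -1" and eq: "u\<^sup>2 - s * u + p = 0"
  shows "ln \<bar>u\<bar> = 0 \<or> \<bar>ln \<bar>u\<bar>\<bar> \<ge> ln ((1 + sqrt 5) / 2)"
proof -
  have ph0: "(1 + sqrt 5) / 2 > (0::real)" by (simp add: add_pos_nonneg)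
  consider "\<bar>u\<bar> = 1" | "\<bar>u\<bar> > 1" | "\<bar>u\<bar> < 1" by linarith
  then show ?thesis
  proof cases
    case 1 then show ?thesis by simp
  next
    case 2
    then have "ln \<bar>u\<bar> \<ge> ln ((1 + sqrt 5) / 2)" using unit_root_abs_gt_1(1)[OF _ s p eq] ph0 by simp
    then show ?thesis using 2 by simp
  next
    case 3
    define v where "v = p / u"
    have "v\<^sup>2 - s * v + p = (p / u\<^sup>2) * (u\<^sup>2 - s * u + p)"
      unfolding v_def using u p by (auto simp: field_simps power2_eq_square)
    then have ev: "v\<^sup>2 - s * v + p = 0" using eq by simp
    have av: "\<bar>v\<bar> = 1 / \<bar>u\<bar>" unfolding v_def using p by (auto simp: abs_divide)
    have "\<bar>v\<bar> > 1" unfolding av using 3 u by (simp add: field_simps)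
    then have "ln \<bar>v\<bar> \<ge> ln ((1 + sqrt 5) / 2)" using unit_root_abs_gt_1(1)[OF _ s p ev] ph0 by simp
    moreover have "ln \<bar>v\<bar> = - ln \<bar>u\<bar>" using u by (simp add: av ln_div)
    ultimately show ?thesis using 3 u by simp
  qed
qed

lemma ln_golden_ratio_pos: "ln ((1 + sqrt 5) / 2) > (0::real)"
proof -
  have "sqrt (5::real) > 1" by (rule real_less_rsqrt) simp
  then show ?thesis by (intro ln_gt_zero) simp
qed

section \<open>Discrete subgroups of the reals\<close>

lemma discrete_subgroup_least_positive:
  fixes \<Lambda> :: "real set"
  assumes d: "\<forall>x\<in>\<Lambda>. \<forall>y\<in>\<Lambda>. x - y \<in> \<Lambda>" and dp: "\<delta> > 0"
    and disc: "\<forall>x\<in>\<Lambda>. x \<noteq> 0 \<longrightarrow> \<bar>x\<bar> \<ge> \<delta>" and pos: "x0 \<in> \<Lambda>" "x0 > 0"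
  shows "Inf {x\<in>\<Lambda>. x > 0} \<in> {x\<in>\<Lambda>. x > 0}"
proof (rule ccontr)
  define P where "P = {x\<in>\<Lambda>. x > 0}"
  define c where "c = Inf P"
  assume "c \<notin> P"
  have Pne: "P \<noteq> {}" using pos unfolding P_def by blast
  have bdd: "bdd_below P" unfolding P_def by (auto intro: bdd_belowI[of _ 0])
  have above: "\<exists>y\<in>P. y < z \<and> y > c" if "z > c" for z
  proof -
    from cInf_less_iff[OF Pne bdd, of z] that obtain y where y: "y \<in> P" "y < z"
      unfolding c_def by blast
    moreover have "c \<le> y" unfolding c_def using y(1) bdd by (rule cInf_lower)
    moreover have "y \<noteq> c" using y(1) \<open>c \<notin> P\<close> by blast
    ultimately show ?thesis by force
  qed
  obtain x where x: "x \<in> P" "x < c + \<delta>" "x > c" using above[of "c + \<delta>"] dp by auto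
  obtain y where y: "y \<in> P" "y < x" "y > c" using above[OF x(3)] by blast
  have "x - y \<in> \<Lambda>" using d x(1) y(1) unfolding P_def by blast
  moreover have "x - y \<noteq> 0" "\<bar>x - y\<bar> < \<delta>" using x y by auto
  ultimately show False using disc by fastforce
qed

lemma discrete_subgroup_cyclic:
  fixes \<Lambda> :: "real set"
  assumes z: "0 \<in> \<Lambda>" and d: "\<forall>x\<in>\<Lambda>. \<forall>y\<in>\<Lambda>. x - y \<in> \<Lambda>" and dp: "\<delta> > 0"
    and disc: "\<forall>x\<in>\<Lambda>. x \<noteq> 0 \<longrightarrow> \<bar>x\<bar> \<ge> \<delta>"
  shows "\<exists>c\<in>\<Lambda>. c \<ge> 0 \<and> (\<forall>x\<in>\<Lambda>. \<exists>k::int. x = of_int k * c)"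
proof (cases "\<Lambda> = {0}")
  case True then show ?thesis by (intro bexI[of _ 0]) auto
next
  case False
  have neg: "- x \<in> \<Lambda>" if "x \<in> \<Lambda>" for x using d z that by (metis diff_0)
  obtain x1 where x1: "x1 \<in> \<Lambda>" "x1 \<noteq> 0" using False z by blast
  define x0 where "x0 = \<bar>x1\<bar>"
  have "x0 \<in> \<Lambda>" "x0 > 0" using x1 neg[OF x1(1)] unfolding x0_def by (auto simp: abs_if)
  define c where "c = Inf {x\<in>\<Lambda>. x > 0}"
  have cL: "c \<in> \<Lambda>" and cpos: "c > 0"
    using discrete_subgroup_least_positive[OF d dp disc \<open>x0 \<in> \<Lambda>\<close> \<open>x0 > 0\<close>] unfolding c_def by auto
  have natm: "of_nat k * c \<in> \<Lambda>" for k
  proof (induction k)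
    case (Suc k)
    have "of_nat (Suc k) * c = of_nat k * c - (- c)" by (simp add: algebra_simps)
    then show ?case using d Suc neg[OF cL] by metis
  qed (simp add: z)
  have intm: "of_int k * c \<in> \<Lambda>" for k :: int
    by (cases k rule: int_cases2) (use natm neg in auto)
  have "\<exists>k::int. x = of_int k * c" if x: "x \<in> \<Lambda>" for x
  proof -
    define k where "k = \<lfloor>x / c\<rfloor>"
    define r where "r = x - of_int k * c"
    have rL: "r \<in> \<Lambda>" unfolding r_def using d x intm by blast
    have "of_int k \<le> x / c" "x / c < of_int k + 1" unfolding k_def by linarith+
    then have r0: "r \<ge> 0" "r < c" unfolding r_def using cpos by (auto simp: field_simps)
    have "r = 0"
    proof (rule ccontr)
      assume "r \<noteq> 0"
      then have "c \<le> r" unfolding c_def using rL r0 by (intro cInf_lower) (auto intro: bdd_belowI[of _ 0])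
      then show False using r0 by simp
    qed
    then show ?thesis unfolding r_def by (intro exI[of _ k]) simp
  qed
  then show ?thesis using cL cpos by (intro bexI[of _ c]) auto
qed

section \<open>Multiquadratic fields\<close>

lemma prod_plus_minus_one:
  "(\<And>i. i \<in> S \<Longrightarrow> f i = 1 \<or> f i = -1) \<Longrightarrow> (\<Prod>i\<in>S. f i) = 1 \<or> (\<Prod>i\<in>S. f i) = (-1::real)"
proof (induction S rule: infinite_finite_induct)
  case (insert x F)
  then have "f x = 1 \<or> f x = -1" "prod f F = 1 \<or> prod f F = -1" by auto
  then show ?case using insert(1,2) by auto
qed auto

definition bit_sign :: "int \<Rightarrow> real" where
  "bit_sign a = (if a = 0 then 1 else -1)"

locale multiquadratic_field =
  fixes L :: "complex set" and n :: nat and \<phi> :: "(complex \<Rightarrow> complex) \<Rightarrow> (nat \<Rightarrow> int)"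
  assumes nf: "number_field L" and tr: "totally_real L" and gal: "galois_over_Q L"
    and iso: "\<phi> \<in> iso (Gal L) (Z2_power n)"
begin

text \<open>Since \<open>L\<close> is Galois, every embedding is an automorphism; \<open>G\<close> is the Galois group.\<close>

abbreviation G where "G \<equiv> embeddings L"

lemma subfield: "subfield_C L"
  using nf by (rule number_field_subfield_C)

lemma carrier_Gal: "carrier (Gal L) = G"
  using gal unfolding Gal_def galois_over_Q_def by auto

lemma aut_mem: "\<sigma> \<in> G \<Longrightarrow> x \<in> L \<Longrightarrow> \<sigma> x \<in> L"
  using gal unfolding galois_over_Q_def by blast

lemma aut_real: "\<sigma> \<in> G \<Longrightarrow> x \<in> L \<Longrightarrow> \<sigma> x \<in> \<real>"
  using tr unfolding totally_real_def by blast

lemma id_aut: "restrict id L \<in> G"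
  unfolding embeddings_def
  using subfield_C_1[OF subfield] subfield_C_add[OF subfield] subfield_C_mult[OF subfield] by auto

lemma mem_real: "x \<in> L \<Longrightarrow> x \<in> \<real>"
  using aut_real[OF id_aut] by simp

lemma compose_aut: assumes "\<sigma> \<in> G" "\<tau> \<in> G" shows "compose L \<sigma> \<tau> \<in> G"
  unfolding embeddings_def
proof (intro CollectI conjI ballI)
  show "compose L \<sigma> \<tau> \<in> extensional L" by simp
  show "compose L \<sigma> \<tau> 1 = 1"
    using subfield_C_1[OF subfield] emb_1[OF subfield assms(1)] emb_1[OF subfield assms(2)]
    by (simp add: compose_eq)
  fix x y assume x: "x \<in> L" and y: "y \<in> L"
  show "compose L \<sigma> \<tau> (x + y) = compose L \<sigma> \<tau> x + compose L \<sigma> \<tau> y"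
    using x y subfield_C_add[OF subfield x y] emb_add[OF subfield assms(2) x y]
      emb_add[OF subfield assms(1)] aut_mem assms
    by (simp add: compose_eq)
  show "compose L \<sigma> \<tau> (x * y) = compose L \<sigma> \<tau> x * compose L \<sigma> \<tau> y"
    using x y subfield_C_mult[OF subfield x y] emb_mult[OF subfield assms(2) x y]
      emb_mult[OF subfield assms(1)] aut_mem assms
    by (simp add: compose_eq)
qed

lemma aut_extensional: "\<sigma> \<in> G \<Longrightarrow> \<sigma> \<in> extensional L"
  unfolding embeddings_def by blast

lemma phi_bij: "bij_betw \<phi> G (PiE {..<n} (\<lambda>_. {0..<2}))"
  using iso unfolding iso_def Z2_power_def carrier_Gal[symmetric]
  by (simp add: carrier_integer_mod_group)

lemma finite_aut: "finite G"
proof -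
  have "finite (PiE {..<n} (\<lambda>_. {0..<(2::int)}))" by (simp add: finite_PiE)
  then show ?thesis using phi_bij bij_betw_finite by blast
qed

lemma phi_mult: assumes "\<sigma> \<in> G" "\<tau> \<in> G"
  shows "\<phi> (compose L \<sigma> \<tau>) = (\<lambda>i\<in>{..<n}. (\<phi> \<sigma> i + \<phi> \<tau> i) mod 2)"
proof -
  have h: "\<phi> \<in> hom (Gal L) (Z2_power n)" using iso unfolding iso_def by blast
  have "\<phi> (\<sigma> \<otimes>\<^bsub>Gal L\<^esub> \<tau>) = \<phi> \<sigma> \<otimes>\<^bsub>Z2_power n\<^esub> \<phi> \<tau>"
    using h assms carrier_Gal by (auto simp: hom_def)
  then show ?thesis by (simp add: Gal_def Z2_power_def integer_mod_group_def)
qed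

lemma phi_val: assumes "\<sigma> \<in> G" "i < n" shows "\<phi> \<sigma> i = 0 \<or> \<phi> \<sigma> i = 1"
proof -
  have "\<phi> \<sigma> \<in> PiE {..<n} (\<lambda>_. {0..<2})" using phi_bij assms(1) unfolding bij_betw_def by blast
  then have "\<phi> \<sigma> i \<in> {0..<2}" using assms(2) by (auto simp: PiE_def Pi_def)
  then show ?thesis by auto
qed

lemma compose_aut_self: assumes "\<sigma> \<in> G" shows "compose L \<sigma> \<sigma> = restrict id L"
proof -
  have e: "compose L (restrict id L) (restrict id L) = restrict id L"
    by (rule extensionalityI[of _ L]) (auto simp: compose_eq)
  have "\<phi> (compose L \<sigma> \<sigma>) = \<phi> (compose L (restrict id L) (restrict id L))"
    using phi_mult[OF assms assms] phi_mult[OF id_aut id_aut] by (simp add: cong: restrict_cong)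
  moreover have "compose L \<sigma> \<sigma> \<in> G" "compose L (restrict id L) (restrict id L) \<in> G"
    using compose_aut assms id_aut by auto
  ultimately have "compose L \<sigma> \<sigma> = compose L (restrict id L) (restrict id L)"
    using phi_bij unfolding bij_betw_def by (meson inj_onD)
  then show ?thesis using e by simp
qed

lemma compose_aut_cancel: assumes "\<sigma> \<in> G" "\<tau> \<in> G" shows "compose L \<sigma> (compose L \<sigma> \<tau>) = \<tau>"
proof (rule extensionalityI[of _ L])
  show "compose L \<sigma> (compose L \<sigma> \<tau>) \<in> extensional L" by simp
  show "\<tau> \<in> extensional L" using aut_extensional assms(2) .
  fix x assume x: "x \<in> L"
  have "compose L \<sigma> (compose L \<sigma> \<tau>) x = compose L \<sigma> \<sigma> (\<tau> x)"
    using x aut_mem[OF assms(2) x] by (simp add: compose_eq)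
  also have "\<dots> = \<tau> x" using compose_aut_self[OF assms(1)] aut_mem[OF assms(2) x] by simp
  finally show "compose L \<sigma> (compose L \<sigma> \<tau>) x = \<tau> x" .
qed

text \<open>As \<open>S\<close> ranges over the subsets of \<open>{..<n}\<close>, \<open>chi S\<close> ranges over the characters of
  \<open>G \<cong> (\<int>/2)\<^sup>n\<close>.\<close>

definition chi :: "nat set \<Rightarrow> (complex \<Rightarrow> complex) \<Rightarrow> real" where
  "chi S \<sigma> = (\<Prod>i\<in>S. bit_sign (\<phi> \<sigma> i))"

definition is_character :: "((complex \<Rightarrow> complex) \<Rightarrow> real) \<Rightarrow> bool" where
  "is_character ch \<longleftrightarrow> (\<forall>\<sigma>\<in>G. ch \<sigma> = 1 \<or> ch \<sigma> = -1) \<and>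
     (\<forall>\<sigma>\<in>G. \<forall>\<tau>\<in>G. ch (compose L \<sigma> \<tau>) = ch \<sigma> * ch \<tau>)"

lemma is_character_values: "is_character ch \<Longrightarrow> \<sigma> \<in> G \<Longrightarrow> ch \<sigma> = 1 \<or> ch \<sigma> = -1"
  and is_character_mult:
    "is_character ch \<Longrightarrow> \<sigma> \<in> G \<Longrightarrow> \<tau> \<in> G \<Longrightarrow> ch (compose L \<sigma> \<tau>) = ch \<sigma> * ch \<tau>"
  unfolding is_character_def by blast+

lemma chi_is_character: assumes "S \<subseteq> {..<n}" shows "is_character (chi S)"
  unfolding is_character_def
proof (intro conjI ballI)
  fix \<sigma> assume "\<sigma> \<in> G"
  show "chi S \<sigma> = 1 \<or> chi S \<sigma> = -1" unfolding chi_def by (rule prod_plus_minus_one) (simp add: bit_sign_def)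
next
  fix \<sigma> \<tau> assume st: "\<sigma> \<in> G" "\<tau> \<in> G"
  have "bit_sign (\<phi> (compose L \<sigma> \<tau>) i) = bit_sign (\<phi> \<sigma> i) * bit_sign (\<phi> \<tau> i)" if "i \<in> S" for i
  proof -
    have i: "i < n" using that assms by auto
    have "\<phi> (compose L \<sigma> \<tau>) i = (\<phi> \<sigma> i + \<phi> \<tau> i) mod 2" using phi_mult[OF st] i by simp
    then show ?thesis using phi_val[OF st(1) i] phi_val[OF st(2) i] by (auto simp: bit_sign_def)
  qed
  then show "chi S (compose L \<sigma> \<tau>) = chi S \<sigma> * chi S \<tau>"
    unfolding chi_def by (simp add: prod.distrib[symmetric])
qed


lemma unitsD: "\<epsilon> \<in> units L \<Longrightarrow> \<epsilon> \<in> L" "\<epsilon> \<in> units L \<Longrightarrow> \<epsilon> \<noteq> 0"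
  "\<epsilon> \<in> units L \<Longrightarrow> algebraic_int \<epsilon>"
  unfolding units_def by blast+

lemma units_inverse: "\<epsilon> \<in> units L \<Longrightarrow> inverse \<epsilon> \<in> units L"
  unfolding units_def using subfield_C_inverse[OF subfield] by auto

lemma units_mult: "a \<in> units L \<Longrightarrow> b \<in> units L \<Longrightarrow> a * b \<in> units L"
  unfolding units_def using subfield_C_mult[OF subfield] algebraic_int_times
  by (auto simp: inverse_mult_distrib)

lemma units_1: "1 \<in> units L"
  unfolding units_def using subfield_C_1[OF subfield] by simp

definition partial_norm :: "((complex \<Rightarrow> complex) \<Rightarrow> real) \<Rightarrow> real \<Rightarrow> complex \<Rightarrow> complex" where
  "partial_norm ch c \<epsilon> = (\<Prod>\<sigma>\<in>{\<sigma>\<in>G. ch \<sigma> = c}. \<sigma> \<epsilon>)"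

lemma character_fibre_translate:
  assumes ch: "is_character ch" and h: "h \<in> G"
  shows "bij_betw (compose L h) {\<sigma>\<in>G. ch \<sigma> = c} {\<sigma>\<in>G. ch \<sigma> = ch h * c}"
proof (rule bij_betwI[where g = "compose L h"])
  have hh: "ch h * ch h = 1" using is_character_values[OF ch h] by auto
  show "compose L h \<in> {\<sigma>\<in>G. ch \<sigma> = c} \<rightarrow> {\<sigma>\<in>G. ch \<sigma> = ch h * c}"
    using compose_aut[OF h] is_character_mult[OF ch h] by auto
  show "compose L h \<in> {\<sigma>\<in>G. ch \<sigma> = ch h * c} \<rightarrow> {\<sigma>\<in>G. ch \<sigma> = c}"
    using compose_aut[OF h] is_character_mult[OF ch h] hh by (auto simp: mult.assoc[symmetric])
qed (use compose_aut_cancel[OF h] in auto)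

lemma partial_norm_mem: "\<epsilon> \<in> L \<Longrightarrow> partial_norm ch c \<epsilon> \<in> L"
  unfolding partial_norm_def by (rule subfield_C_prod[OF subfield]) (auto intro: aut_mem)

lemma aut_partial_norm:
  assumes ch: "is_character ch" and h: "h \<in> G" and e: "\<epsilon> \<in> L"
  shows "h (partial_norm ch c \<epsilon>) = partial_norm ch (ch h * c) \<epsilon>"
proof -
  have "h (partial_norm ch c \<epsilon>) = (\<Prod>\<sigma>\<in>{\<sigma>\<in>G. ch \<sigma> = c}. compose L h \<sigma> \<epsilon>)"
    unfolding partial_norm_def using e
    by (subst emb_prod[OF subfield h]) (auto intro: aut_mem simp: compose_eq)
  also have "\<dots> = partial_norm ch (ch h * c) \<epsilon>"
    unfolding partial_norm_def by (rule prod.reindex_bij_betw[OF character_fibre_translate[OF ch h]])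
  finally show ?thesis .
qed

lemma partial_norm_algebraic_int: "\<epsilon> \<in> units L \<Longrightarrow> algebraic_int (partial_norm ch c \<epsilon>)"
  unfolding partial_norm_def using unitsD emb_algebraic_int[OF subfield]
  by (intro algebraic_int_prod) auto

lemma partial_norm_nonzero: "\<epsilon> \<in> units L \<Longrightarrow> partial_norm ch c \<epsilon> \<noteq> 0"
  unfolding partial_norm_def using unitsD emb_nonzero[OF subfield] finite_aut by auto

lemma partial_norm_inverse:
  "\<epsilon> \<in> L \<Longrightarrow> partial_norm ch c (inverse \<epsilon>) = inverse (partial_norm ch c \<epsilon>)"
proof -
  assume e: "\<epsilon> \<in> L"
  have "partial_norm ch c (inverse \<epsilon>) = (\<Prod>\<sigma>\<in>{\<sigma>\<in>G. ch \<sigma> = c}. (inverse \<circ> (\<lambda>\<sigma>. \<sigma> \<epsilon>)) \<sigma>)"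
    unfolding partial_norm_def using emb_inverse[OF subfield _ e] by (intro prod.cong) auto
  also have "\<dots> = inverse (partial_norm ch c \<epsilon>)" unfolding partial_norm_def by (rule prod_inversef)
  finally show ?thesis .
qed


text \<open>An automorphism either fixes both partial norms or swaps them, so their sum and product
  are rational algebraic integers.\<close>

lemma aut_fixes_partial_norms:
  assumes ch: "is_character ch" and e: "\<epsilon> \<in> L" and h: "h \<in> G"
  shows "h (partial_norm ch 1 \<epsilon> + partial_norm ch (-1) \<epsilon>) = partial_norm ch 1 \<epsilon> + partial_norm ch (-1) \<epsilon>"
    and "h (partial_norm ch 1 \<epsilon> * partial_norm ch (-1) \<epsilon>) = partial_norm ch 1 \<epsilon> * partial_norm ch (-1) \<epsilon>"
  using emb_add[OF subfield h partial_norm_mem[OF e] partial_norm_mem[OF e]]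
    emb_mult[OF subfield h partial_norm_mem[OF e] partial_norm_mem[OF e]]
    aut_partial_norm[OF ch h e, of 1] aut_partial_norm[OF ch h e, of "-1"] is_character_values[OF ch h]
  by auto

lemma partial_norm_sum_Ints:
  assumes ch: "is_character ch" and e: "\<epsilon> \<in> units L"
  shows "partial_norm ch 1 \<epsilon> + partial_norm ch (-1) \<epsilon> \<in> \<int>"
  using unitsD[OF e] aut_fixes_partial_norms(1)[OF ch] partial_norm_mem
  by (intro fixed_by_embeddings_imp_int[OF nf] subfield_C_add[OF subfield]
      algebraic_int_plus partial_norm_algebraic_int[OF e]) auto

lemma partial_norm_prod_Ints:
  assumes ch: "is_character ch" and e: "\<epsilon> \<in> units L"
  shows "partial_norm ch 1 \<epsilon> * partial_norm ch (-1) \<epsilon> \<in> \<int>"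
  using unitsD[OF e] aut_fixes_partial_norms(2)[OF ch] partial_norm_mem
  by (intro fixed_by_embeddings_imp_int[OF nf] subfield_C_mult[OF subfield]
      algebraic_int_times partial_norm_algebraic_int[OF e]) auto

lemma partial_norm_prod_unit:
  assumes ch: "is_character ch" and e: "\<epsilon> \<in> units L"
  shows "partial_norm ch 1 \<epsilon> * partial_norm ch (-1) \<epsilon> = 1 \<or> partial_norm ch 1 \<epsilon> * partial_norm ch (-1) \<epsilon> = -1"
proof -
  define N where "N = partial_norm ch 1 \<epsilon> * partial_norm ch (-1) \<epsilon>"
  have "N \<in> \<int>" unfolding N_def using partial_norm_prod_Ints[OF ch e] .
  moreover have "inverse N \<in> \<int>"
    using partial_norm_prod_Ints[OF ch units_inverse[OF e]] partial_norm_inverse[OF unitsD(1)[OF e]]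
    unfolding N_def by (simp add: inverse_mult_distrib)
  moreover have "N \<noteq> 0" unfolding N_def using partial_norm_nonzero[OF e] by simp
  ultimately obtain a b where ab: "N = of_int a" "inverse N = of_int b" by (meson Ints_cases)
  then have "of_int (a * b) = (1::complex)" using \<open>N \<noteq> 0\<close> by (metis of_int_mult right_inverse)
  then have "a * b = 1" by (metis of_int_eq_1_iff)
  then have "a = 1 \<or> a = -1" using zmult_eq_1_iff[of a b] by blast
  then show ?thesis using ab(1) unfolding N_def by auto
qed

definition char_regulator :: "((complex \<Rightarrow> complex) \<Rightarrow> real) \<Rightarrow> complex \<Rightarrow> real" where
  "char_regulator ch \<epsilon> = (\<Sum>\<sigma>\<in>G. ch \<sigma> * ln (cmod (\<sigma> \<epsilon>)))"

lemma ln_partial_norm: "\<epsilon> \<in> units L \<Longrightarrow> ln (cmod (partial_norm ch c \<epsilon>)) = (\<Sum>\<sigma>\<in>{\<sigma>\<in>G. ch \<sigma> = c}. ln (cmod (\<sigma> \<epsilon>)))"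
proof -
  assume e: "\<epsilon> \<in> units L"
  have "cmod (partial_norm ch c \<epsilon>) = (\<Prod>\<sigma>\<in>{\<sigma>\<in>G. ch \<sigma> = c}. cmod (\<sigma> \<epsilon>))"
    unfolding partial_norm_def by (simp add: prod_norm)
  moreover have "\<sigma> \<epsilon> \<noteq> 0" if "\<sigma> \<in> G" for \<sigma> using emb_nonzero[OF subfield that] unitsD[OF e] by blast
  moreover have "finite {\<sigma>\<in>G. ch \<sigma> = c}" using finite_aut by simp
  ultimately show ?thesis using ln_prod[of "{\<sigma>\<in>G. ch \<sigma> = c}" "\<lambda>\<sigma>. cmod (\<sigma> \<epsilon>)"] by simp
qed

lemma char_regulator_eq_ln_partial_norms:
  assumes ch: "is_character ch" and e: "\<epsilon> \<in> units L"
  shows "char_regulator ch \<epsilon> = ln (cmod (partial_norm ch 1 \<epsilon>)) - ln (cmod (partial_norm ch (-1) \<epsilon>))"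
proof -
  have GU: "G = {\<sigma>\<in>G. ch \<sigma> = 1} \<union> {\<sigma>\<in>G. ch \<sigma> = -1}" using ch unfolding is_character_def by auto
  have "char_regulator ch \<epsilon> = (\<Sum>\<sigma>\<in>{\<sigma>\<in>G. ch \<sigma> = 1}. ch \<sigma> * ln (cmod (\<sigma> \<epsilon>))) + (\<Sum>\<sigma>\<in>{\<sigma>\<in>G. ch \<sigma> = -1}. ch \<sigma> * ln (cmod (\<sigma> \<epsilon>)))"
    unfolding char_regulator_def using finite_aut by (subst GU, subst sum.union_disjoint) auto
  also have "\<dots> = (\<Sum>\<sigma>\<in>{\<sigma>\<in>G. ch \<sigma> = 1}. ln (cmod (\<sigma> \<epsilon>))) - (\<Sum>\<sigma>\<in>{\<sigma>\<in>G. ch \<sigma> = -1}. ln (cmod (\<sigma> \<epsilon>)))"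
    by (simp add: sum_negf)
  finally show ?thesis using ln_partial_norm[OF e] by simp
qed

text \<open>The partial norms are real (\<open>L\<close> is totally real) with integral sum and product \<open>\<plusminus>1\<close>.\<close>

lemma char_regulator_quadratic:
  assumes ch: "is_character ch" and e: "\<epsilon> \<in> units L"
  obtains u s p where "partial_norm ch 1 \<epsilon> = of_real u" "partial_norm ch (-1) \<epsilon> = of_real (s - u)"
    "s \<in> \<int>" "p = 1 \<or> p = -1" "u \<noteq> 0" "u\<^sup>2 - s * u + p = 0" "char_regulator ch \<epsilon> = 2 * ln \<bar>u\<bar>"
proof -
  define P where "P = partial_norm ch 1 \<epsilon>"
  define M where "M = partial_norm ch (-1) \<epsilon>"
  have "P \<in> \<real>" unfolding P_def using mem_real partial_norm_mem unitsD(1)[OF e] by blast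
  then obtain u where u: "P = of_real u" by (meson Reals_cases)
  have "P + M \<in> \<int>" unfolding P_def M_def using partial_norm_sum_Ints[OF ch e] .
  then obtain k where k: "P + M = of_int k" by (meson Ints_cases)
  define s :: real where "s = of_int k"
  have Ms: "M = of_real (s - u)" using k u unfolding s_def by (simp add: algebra_simps)
  obtain p :: real where p: "p = 1 \<or> p = -1" "P * M = of_real p"
    using partial_norm_prod_unit[OF ch e] unfolding P_def M_def by (metis of_real_1 of_real_minus)
  have u0: "u \<noteq> 0" using partial_norm_nonzero[OF e] u unfolding P_def by auto
  have "of_real (u * (s - u)) = (of_real p :: complex)" using p(2) u Ms by simp
  then have up: "u * (s - u) = p" using of_real_eq_iff by blast
  then have eq: "u\<^sup>2 - s * u + p = 0" by (simp add: algebra_simps power2_eq_square)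
  have "\<bar>u\<bar> * \<bar>s - u\<bar> = 1" using up p(1) by (auto simp: abs_mult[symmetric])
  moreover have "cmod M = \<bar>s - u\<bar>" unfolding Ms by (rule norm_of_real)
  ultimately have "cmod M = 1 / \<bar>u\<bar>" using u0 by (simp add: field_simps)
  then have "ln (cmod M) = - ln \<bar>u\<bar>" using u0 by (simp add: ln_div)
  then have "char_regulator ch \<epsilon> = 2 * ln \<bar>u\<bar>"
    using char_regulator_eq_ln_partial_norms[OF ch e] u unfolding P_def[symmetric] M_def[symmetric]
    by simp
  moreover have "s \<in> \<int>" unfolding s_def by simp
  ultimately show ?thesis using that u Ms p(1) eq u0 unfolding P_def M_def by blast
qed

lemma char_regulator_divide:
  assumes a: "a \<in> units L" and b: "b \<in> units L"
  shows "char_regulator ch (a * inverse b) = char_regulator ch a - char_regulator ch b"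
proof -
  have aL: "a \<in> L" "a \<noteq> 0" and bL: "b \<in> L" "b \<noteq> 0" using unitsD a b by auto
  have "ch \<sigma> * ln (cmod (\<sigma> (a * inverse b))) = ch \<sigma> * ln (cmod (\<sigma> a)) - ch \<sigma> * ln (cmod (\<sigma> b))"
    if s: "\<sigma> \<in> G" for \<sigma>
  proof -
    have "\<sigma> (a * inverse b) = \<sigma> a * inverse (\<sigma> b)"
      using emb_mult[OF subfield s aL(1) subfield_C_inverse[OF subfield bL(1)]] emb_inverse[OF subfield s bL(1)] by simp
    moreover have "\<sigma> a \<noteq> 0" "\<sigma> b \<noteq> 0" using emb_nonzero[OF subfield s] aL bL by auto
    ultimately have "ln (cmod (\<sigma> (a * inverse b))) = ln (cmod (\<sigma> a)) - ln (cmod (\<sigma> b))"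
      by (simp add: norm_mult norm_inverse ln_mult ln_inverse)
    then show ?thesis by (simp add: right_diff_distrib)
  qed
  then show ?thesis unfolding char_regulator_def by (simp add: sum_subtractf)
qed

lemma char_regulator_1: "char_regulator ch 1 = 0"
  unfolding char_regulator_def by (rule sum.neutral) (simp add: emb_1[OF subfield])

lemma char_regulator_zero_or_ge:
  assumes ch: "is_character ch" and e: "\<epsilon> \<in> units L"
  shows "char_regulator ch \<epsilon> = 0 \<or> \<bar>char_regulator ch \<epsilon>\<bar> \<ge> 2 * ln ((1 + sqrt 5) / 2)"
proof -
  obtain u s p where "s \<in> \<int>" "p = 1 \<or> p = -1" "u \<noteq> 0" "u\<^sup>2 - s * u + p = 0"
    "char_regulator ch \<epsilon> = 2 * ln \<bar>u\<bar>"
    using char_regulator_quadratic[OF ch e] by metis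
  then show ?thesis using unit_root_ln_abs[of u s p] by auto
qed

lemma char_regulator_cyclic:
  assumes ch: "is_character ch"
  obtains e where "e \<in> units L" "char_regulator ch e \<ge> 0"
    "\<forall>\<epsilon>\<in>units L. \<exists>k::int. char_regulator ch \<epsilon> = of_int k * char_regulator ch e"
proof -
  define \<Lambda> where "\<Lambda> = char_regulator ch ` units L"
  have "0 \<in> \<Lambda>" unfolding \<Lambda>_def using char_regulator_1 units_1 by force
  moreover have "\<forall>x\<in>\<Lambda>. \<forall>y\<in>\<Lambda>. x - y \<in> \<Lambda>"
  proof (intro ballI)
    fix x y assume "x \<in> \<Lambda>" "y \<in> \<Lambda>"
    then obtain a b where ab: "a \<in> units L" "b \<in> units L"
      "x = char_regulator ch a" "y = char_regulator ch b"
      unfolding \<Lambda>_def by blast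
    then have "x - y = char_regulator ch (a * inverse b)" using char_regulator_divide by simp
    moreover have "a * inverse b \<in> units L" using units_mult[OF ab(1) units_inverse[OF ab(2)]] .
    ultimately show "x - y \<in> \<Lambda>" unfolding \<Lambda>_def by blast
  qed
  moreover have "2 * ln ((1 + sqrt 5) / 2) > (0::real)" using ln_golden_ratio_pos by simp
  moreover have "\<forall>x\<in>\<Lambda>. x \<noteq> 0 \<longrightarrow> \<bar>x\<bar> \<ge> 2 * ln ((1 + sqrt 5) / 2)"
    unfolding \<Lambda>_def using char_regulator_zero_or_ge[OF ch] by blast
  ultimately have "\<exists>c\<in>\<Lambda>. c \<ge> 0 \<and> (\<forall>x\<in>\<Lambda>. \<exists>k::int. x = of_int k * c)"
    by (rule discrete_subgroup_cyclic)
  then show ?thesis using that unfolding \<Lambda>_def by blast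
qed

lemma aut_partial_norm_diff:
  assumes ch: "is_character ch" and e: "\<epsilon> \<in> L" and h: "h \<in> G"
  shows "h (partial_norm ch 1 \<epsilon> - partial_norm ch (-1) \<epsilon>) = ch h * (partial_norm ch 1 \<epsilon> - partial_norm ch (-1) \<epsilon>)"
  using emb_diff[OF subfield h partial_norm_mem[OF e] partial_norm_mem[OF e]]
    aut_partial_norm[OF ch h e, of 1] aut_partial_norm[OF ch h e, of "-1"] is_character_values[OF ch h]
  by auto

text \<open>A small regulator forces \<open>s\<^sup>2 - 4 p = 5\<close>, and the difference of the partial norms is then
  a square root of \<open>5\<close> on which \<open>G\<close> acts through the character.\<close>

lemma small_char_regulator_sqrt5:
  assumes ch: "is_character ch" and e: "\<epsilon> \<in> units L"
    and pos: "0 < char_regulator ch \<epsilon>" and lt: "char_regulator ch \<epsilon> < 2 * ln (1 + sqrt 2)"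
  shows "(partial_norm ch 1 \<epsilon> - partial_norm ch (-1) \<epsilon>)\<^sup>2 = 5"
proof -
  obtain u s p where u: "partial_norm ch 1 \<epsilon> = of_real u" "partial_norm ch (-1) \<epsilon> = of_real (s - u)"
    "s \<in> \<int>" "p = 1 \<or> p = -1" "u \<noteq> 0" "u\<^sup>2 - s * u + p = 0" "char_regulator ch \<epsilon> = 2 * ln \<bar>u\<bar>"
    using char_regulator_quadratic[OF ch e] by metis
  have u1: "\<bar>u\<bar> > 1" using pos u(5,7) by (simp add: ln_gt_zero_iff)
  have "ln \<bar>u\<bar> < ln (1 + sqrt 2)" using lt u(7) by simp
  then have "\<bar>u\<bar> < 1 + sqrt 2" using u(5) by (simp add: add_pos_nonneg)
  then have "s\<^sup>2 - 4 * p = 5" using unit_root_abs_gt_1(2)[OF u1 u(3,4,6)] by blast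
  moreover have "(u - (s - u))\<^sup>2 = s\<^sup>2 - 4 * p" using u(6) by (simp add: power2_eq_square algebra_simps)
  ultimately have "(of_real ((u - (s - u))\<^sup>2) :: complex) = 5" by simp
  then show ?thesis unfolding u(1,2) by simp
qed

lemma characters_eq_if_small_regulators:
  assumes ch: "is_character ch" and ps: "is_character ps" and e: "\<epsilon> \<in> units L" and f: "\<eta> \<in> units L"
    and "0 < char_regulator ch \<epsilon>" "char_regulator ch \<epsilon> < 2 * ln (1 + sqrt 2)"
    and "0 < char_regulator ps \<eta>" "char_regulator ps \<eta> < 2 * ln (1 + sqrt 2)"
    and h: "h \<in> G"
  shows "ch h = ps h"
proof -
  define r where "r = partial_norm ch 1 \<epsilon> - partial_norm ch (-1) \<epsilon>"
  define r' where "r' = partial_norm ps 1 \<eta> - partial_norm ps (-1) \<eta>"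
  have "r\<^sup>2 = 5" "r'\<^sup>2 = 5"
    unfolding r_def r'_def using small_char_regulator_sqrt5 assms by blast+
  then have r0: "r \<noteq> 0" and "r' = r \<or> r' = - r"
    using power2_eq_iff[of r' r] by auto
  moreover have "h r = ch h * r" "h r' = ps h * r'"
    unfolding r_def r'_def using aut_partial_norm_diff ch ps unitsD(1) e f h by blast+
  moreover have "h (- r) = - h r"
    unfolding r_def using emb_uminus[OF subfield h] subfield_C_diff[OF subfield] partial_norm_mem
      unitsD(1)[OF e] by blast
  ultimately have "ch h * r = ps h * r" by auto
  then show ?thesis using r0 by simp
qed
end

section \<open>The exterior square of the unit lattice\<close>

lemma wedge2_LOG_units_outside:
  "w \<in> wedge2_LOG_units L \<Longrightarrow> v1 \<notin> arch_places L \<or> v2 \<notin> arch_places L \<Longrightarrow> w (v1, v2) = 0"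
  by (induction w rule: wedge2_LOG_units.induct) (auto simp: wedge2_def)

lemma wedge2_LOG_units_antisym: "w \<in> wedge2_LOG_units L \<Longrightarrow> w (v1, v2) = - w (v2, v1)"
  by (induction w rule: wedge2_LOG_units.induct) (auto simp: wedge2_def)

lemma wedge2_LOG_units_diag: "w \<in> wedge2_LOG_units L \<Longrightarrow> w (v, v) = 0"
  using wedge2_LOG_units_antisym[of w L v v] by simp

context multiquadratic_field
begin

abbreviation pl where "pl \<sigma> \<equiv> place_of L \<sigma>"

lemma arch_places_eq: "arch_places L = pl ` G"
  unfolding arch_places_def by simp

lemma real_place_pl: "\<sigma> \<in> G \<Longrightarrow> real_place L (pl \<sigma>)"
  unfolding real_place_def using aut_real by blast

lemma LOG_pl: "\<sigma> \<in> G \<Longrightarrow> \<gamma> \<in> L \<Longrightarrow> LOG L \<gamma> (pl \<sigma>) = ln (cmod (\<sigma> \<gamma>))"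
  unfolding LOG_def e_place_def using real_place_pl arch_places_eq by (simp add: place_of_def)

lemma inj_on_pl: "inj_on pl G"
proof (rule inj_onI)
  fix \<sigma> \<tau> assume s: "\<sigma> \<in> G" and t: "\<tau> \<in> G" and eq: "pl \<sigma> = pl \<tau>"
  show "\<sigma> = \<tau>"
  proof (rule extensionalityI[of _ L])
    show "\<sigma> \<in> extensional L" "\<tau> \<in> extensional L" using aut_extensional s t by auto
    fix x assume x: "x \<in> L"
    have x1: "x + 1 \<in> L" using subfield_C_add[OF subfield x subfield_C_1[OF subfield]] .
    have c1: "cmod (\<sigma> x) = cmod (\<tau> x)" using fun_cong[OF eq, of x] x by (simp add: place_of_def)
    have c2: "cmod (\<sigma> (x + 1)) = cmod (\<tau> (x + 1))"
      using fun_cong[OF eq, of "x + 1"] x1 by (simp add: place_of_def)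
    obtain a where a: "\<sigma> x = of_real a" using aut_real[OF s x] by (meson Reals_cases)
    obtain b where b: "\<tau> x = of_real b" using aut_real[OF t x] by (meson Reals_cases)
    have "\<sigma> (x + 1) = of_real (a + 1)"
      using emb_add[OF subfield s x subfield_C_1[OF subfield]] emb_1[OF subfield s] a by simp
    moreover have "\<tau> (x + 1) = of_real (b + 1)"
      using emb_add[OF subfield t x subfield_C_1[OF subfield]] emb_1[OF subfield t] b by simp
    ultimately have "\<bar>a + 1\<bar> = \<bar>b + 1\<bar>" using c2 by (metis norm_of_real)
    moreover have "\<bar>a\<bar> = \<bar>b\<bar>" using c1 a b by (metis norm_of_real)
    ultimately have "a = b" by (auto simp: abs_if split: if_splits)
    then show "\<sigma> x = \<tau> x" using a b by simp
  qed
qed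

definition char_pairing :: "((complex \<Rightarrow> complex) \<Rightarrow> real) \<Rightarrow> ((complex \<Rightarrow> complex) \<Rightarrow> real) \<Rightarrow>
    ((complex \<Rightarrow> real) \<times> (complex \<Rightarrow> real) \<Rightarrow> real) \<Rightarrow> real" where
  "char_pairing ch ps w = (\<Sum>\<sigma>\<in>G. \<Sum>\<tau>\<in>G. w (pl \<sigma>, pl \<tau>) * ch \<sigma> * ps \<tau>)"

lemma char_pairing_wedge2:
  assumes a: "a \<in> units L" and b: "b \<in> units L"
  shows "char_pairing ch ps (wedge2 L (LOG L a) (LOG L b))
    = char_regulator ch a * char_regulator ps b - char_regulator ch b * char_regulator ps a"
proof -
  have aL: "a \<in> L" and bL: "b \<in> L" using unitsD(1) a b by auto
  have "char_pairing ch ps (wedge2 L (LOG L a) (LOG L b)) =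
     (\<Sum>\<sigma>\<in>G. \<Sum>\<tau>\<in>G. (ch \<sigma> * ln (cmod (\<sigma> a))) * (ps \<tau> * ln (cmod (\<tau> b)))
                   - (ch \<sigma> * ln (cmod (\<sigma> b))) * (ps \<tau> * ln (cmod (\<tau> a))))"
    unfolding char_pairing_def
  proof (intro sum.cong refl)
    fix \<sigma> \<tau> assume s: "\<sigma> \<in> G" and t: "\<tau> \<in> G"
    have "pl \<sigma> \<in> arch_places L" "pl \<tau> \<in> arch_places L" using arch_places_eq s t by auto
    then show "wedge2 L (LOG L a) (LOG L b) (pl \<sigma>, pl \<tau>) * ch \<sigma> * ps \<tau> =
      (ch \<sigma> * ln (cmod (\<sigma> a))) * (ps \<tau> * ln (cmod (\<tau> b)))
        - (ch \<sigma> * ln (cmod (\<sigma> b))) * (ps \<tau> * ln (cmod (\<tau> a)))"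
      unfolding wedge2_def using LOG_pl s t aL bL by (simp add: algebra_simps)
  qed
  also have "\<dots> = char_regulator ch a * char_regulator ps b - char_regulator ch b * char_regulator ps a"
    unfolding char_regulator_def by (simp add: sum_subtractf sum_product)
  finally show ?thesis .
qed

lemma char_pairing_lattice:
  assumes c1: "\<forall>\<epsilon>\<in>units L. \<exists>k::int. char_regulator ch \<epsilon> = of_int k * c1"
    and c2: "\<forall>\<epsilon>\<in>units L. \<exists>k::int. char_regulator ps \<epsilon> = of_int k * c2"
  shows "w \<in> wedge2_LOG_units L \<Longrightarrow> \<exists>k::int. char_pairing ch ps w = of_int k * c1 * c2"
proof (induction w rule: wedge2_LOG_units.induct)
  case zero
  then show ?case by (intro exI[of _ 0]) (simp add: char_pairing_def)
next
  case (gen a b)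
  obtain k1 k2 k3 k4 where k: "char_regulator ch a = of_int k1 * c1" "char_regulator ps b = of_int k2 * c2"
    "char_regulator ch b = of_int k3 * c1" "char_regulator ps a = of_int k4 * c2"
    using c1 c2 gen by meson
  have "char_pairing ch ps (wedge2 L (LOG L a) (LOG L b)) = char_regulator ch a * char_regulator ps b - char_regulator ch b * char_regulator ps a"
    by (rule char_pairing_wedge2[OF gen])
  also have "\<dots> = of_int (k1 * k2 - k3 * k4) * c1 * c2" using k by (simp add: algebra_simps)
  finally have "char_pairing ch ps (wedge2 L (LOG L a) (LOG L b)) = of_int (k1 * k2 - k3 * k4) * c1 * c2" .
  then show ?case by blast
next
  case (diff x y)
  obtain k1 k2 where k: "char_pairing ch ps x = of_int k1 * c1 * c2" "char_pairing ch ps y = of_int k2 * c1 * c2"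
    using diff.IH by blast
  have "char_pairing ch ps (\<lambda>p. x p - y p) = char_pairing ch ps x - char_pairing ch ps y"
    unfolding char_pairing_def by (simp add: left_diff_distrib sum_subtractf)
  also have "\<dots> = of_int (k1 - k2) * c1 * c2" using k by (simp add: algebra_simps)
  finally show ?case by blast
qed

lemma char_pairing_same_character:
  assumes w: "w \<in> wedge2_LOG_units L" and eq: "\<forall>\<sigma>\<in>G. ch \<sigma> = ps \<sigma>"
  shows "char_pairing ch ps w = 0"
proof -
  define f where "f = (\<lambda>\<sigma> \<tau>. w (pl \<sigma>, pl \<tau>) * ch \<sigma> * ch \<tau>)"
  have "char_pairing ch ps w = (\<Sum>\<sigma>\<in>G. \<Sum>\<tau>\<in>G. f \<sigma> \<tau>)" unfolding char_pairing_def f_def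
    by (intro sum.cong refl) (simp add: eq)
  also have "\<dots> = (\<Sum>\<tau>\<in>G. \<Sum>\<sigma>\<in>G. f \<sigma> \<tau>)" by (rule sum.swap)
  also have "\<dots> = (\<Sum>\<tau>\<in>G. \<Sum>\<sigma>\<in>G. - f \<tau> \<sigma>)"
  proof (intro sum.cong refl)
    fix \<tau> \<sigma>
    have "w (pl \<sigma>, pl \<tau>) = - w (pl \<tau>, pl \<sigma>)" by (rule wedge2_LOG_units_antisym[OF w])
    then show "f \<sigma> \<tau> = - f \<tau> \<sigma>" unfolding f_def by simp
  qed
  also have "\<dots> = - (\<Sum>\<sigma>\<in>G. \<Sum>\<tau>\<in>G. f \<sigma> \<tau>)" by (simp add: sum_negf)
  finally have "(\<Sum>\<sigma>\<in>G. \<Sum>\<tau>\<in>G. f \<sigma> \<tau>) = 0" using \<open>char_pairing ch ps w = _\<close> by simp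
  then show ?thesis using \<open>char_pairing ch ps w = _\<close> by simp
qed


lemma chi_orthogonality:
  assumes s: "\<sigma> \<in> G" and s0: "\<sigma>0 \<in> G"
  shows "(\<Sum>S\<in>Pow {..<n}. chi S \<sigma> * chi S \<sigma>0) = (if \<sigma> = \<sigma>0 then 2 ^ n else 0)"
proof -
  define f where "f i = bit_sign (\<phi> \<sigma> i) * bit_sign (\<phi> \<sigma>0 i)" for i
  have "(\<Sum>S\<in>Pow {..<n}. chi S \<sigma> * chi S \<sigma>0) = (\<Sum>S\<in>Pow {..<n}. \<Prod>i\<in>S. f i)"
    unfolding chi_def f_def by (simp add: prod.distrib)
  also have "\<dots> = (\<Prod>i\<in>{..<n}. f i + 1)"
    using prod_add[of "{..<n}" f "\<lambda>_. 1"] by simp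
  finally have eq: "(\<Sum>S\<in>Pow {..<n}. chi S \<sigma> * chi S \<sigma>0) = (\<Prod>i\<in>{..<n}. f i + 1)" .
  show ?thesis
  proof (cases "\<sigma> = \<sigma>0")
    case True
    then have "f i + 1 = 2" for i unfolding f_def by (simp add: bit_sign_def)
    then show ?thesis using eq True by simp
  next
    case False
    have ne: "\<phi> \<sigma> \<noteq> \<phi> \<sigma>0" using False phi_bij s s0 unfolding bij_betw_def by (meson inj_onD)
    have p1: "\<phi> \<sigma> \<in> extensional {..<n}" using phi_bij s unfolding bij_betw_def PiE_def by blast
    have p2: "\<phi> \<sigma>0 \<in> extensional {..<n}" using phi_bij s0 unfolding bij_betw_def PiE_def by blast
    have "\<exists>i<n. \<phi> \<sigma> i \<noteq> \<phi> \<sigma>0 i"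
    proof (rule ccontr)
      assume c: "\<not> (\<exists>i<n. \<phi> \<sigma> i \<noteq> \<phi> \<sigma>0 i)"
      have "\<phi> \<sigma> = \<phi> \<sigma>0"
      proof (rule extensionalityI[OF p1 p2])
        fix i assume "i \<in> {..<n}" then show "\<phi> \<sigma> i = \<phi> \<sigma>0 i" using c by blast
      qed
      then show False using ne by contradiction
    qed
    then obtain i where i: "i < n" "\<phi> \<sigma> i \<noteq> \<phi> \<sigma>0 i" by blast
    then have "f i + 1 = 0" unfolding f_def using phi_val[OF s i(1)] phi_val[OF s0 i(1)]
      by (auto simp: bit_sign_def)
    then have "(\<Prod>i\<in>{..<n}. f i + 1) = 0" using i(1) by (intro prod_zero) auto
    then show ?thesis using eq False by simp
  qed
qed

lemma chi_fourier_inversion: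
  assumes s0: "\<sigma>0 \<in> G" and t0: "\<tau>0 \<in> G"
  shows "(\<Sum>S1\<in>Pow {..<n}. \<Sum>S2\<in>Pow {..<n}. char_pairing (chi S1) (chi S2) w * chi S1 \<sigma>0 * chi S2 \<tau>0)
         = 2 ^ n * 2 ^ n * w (pl \<sigma>0, pl \<tau>0)"
proof -
  define P where "P = Pow {..<n}"
  define F where "F = (\<lambda>S1 S2 \<sigma> \<tau>. w (pl \<sigma>, pl \<tau>) * (chi S1 \<sigma> * chi S1 \<sigma>0) * (chi S2 \<tau> * chi S2 \<tau>0))"
  have "(\<Sum>S1\<in>P. \<Sum>S2\<in>P. char_pairing (chi S1) (chi S2) w * chi S1 \<sigma>0 * chi S2 \<tau>0)
      = (\<Sum>S1\<in>P. \<Sum>S2\<in>P. \<Sum>\<sigma>\<in>G. \<Sum>\<tau>\<in>G. F S1 S2 \<sigma> \<tau>)"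
    unfolding char_pairing_def F_def
    by (intro sum.cong refl) (simp add: sum_distrib_left sum_distrib_right mult_ac)
  also have "\<dots> = (\<Sum>S1\<in>P. \<Sum>\<sigma>\<in>G. \<Sum>S2\<in>P. \<Sum>\<tau>\<in>G. F S1 S2 \<sigma> \<tau>)"
    by (rule sum.cong[OF refl], rule sum.swap)
  also have "\<dots> = (\<Sum>\<sigma>\<in>G. \<Sum>S1\<in>P. \<Sum>S2\<in>P. \<Sum>\<tau>\<in>G. F S1 S2 \<sigma> \<tau>)"
    by (rule sum.swap)
  also have "\<dots> = (\<Sum>\<sigma>\<in>G. \<Sum>S1\<in>P. \<Sum>\<tau>\<in>G. \<Sum>S2\<in>P. F S1 S2 \<sigma> \<tau>)"
    by (rule sum.cong[OF refl], rule sum.cong[OF refl], rule sum.swap)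
  also have "\<dots> = (\<Sum>\<sigma>\<in>G. \<Sum>\<tau>\<in>G. \<Sum>S1\<in>P. \<Sum>S2\<in>P. F S1 S2 \<sigma> \<tau>)"
    by (rule sum.cong[OF refl], rule sum.swap)
  also have "\<dots> = (\<Sum>\<sigma>\<in>G. \<Sum>\<tau>\<in>G. w (pl \<sigma>, pl \<tau>) * (\<Sum>S1\<in>P. chi S1 \<sigma> * chi S1 \<sigma>0) * (\<Sum>S2\<in>P. chi S2 \<tau> * chi S2 \<tau>0))"
    unfolding F_def by (simp add: sum_distrib_left sum_distrib_right mult_ac)
  also have "\<dots> = (\<Sum>\<sigma>\<in>G. \<Sum>\<tau>\<in>G. w (pl \<sigma>, pl \<tau>) * (if \<sigma> = \<sigma>0 then 2 ^ n else 0) * (if \<tau> = \<tau>0 then 2 ^ n else 0))"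
    unfolding P_def by (intro sum.cong refl) (simp add: chi_orthogonality s0 t0)
  also have "\<dots> = (\<Sum>\<sigma>\<in>G. w (pl \<sigma>, pl \<tau>0) * (if \<sigma> = \<sigma>0 then 2 ^ n else 0) * 2 ^ n)"
  proof (rule sum.cong[OF refl])
    fix \<sigma>
    have "(\<Sum>\<tau>\<in>G. w (pl \<sigma>, pl \<tau>) * (if \<sigma> = \<sigma>0 then 2 ^ n else 0) * (if \<tau> = \<tau>0 then 2 ^ n else 0))
        = (\<Sum>\<tau>\<in>G. if \<tau> = \<tau>0 then w (pl \<sigma>, pl \<tau>0) * (if \<sigma> = \<sigma>0 then 2 ^ n else 0) * 2 ^ n else 0)"
      by (rule sum.cong) auto
    also have "\<dots> = w (pl \<sigma>, pl \<tau>0) * (if \<sigma> = \<sigma>0 then 2 ^ n else 0) * 2 ^ n"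
      using t0 finite_aut by (simp add: sum.delta)
    finally show "(\<Sum>\<tau>\<in>G. w (pl \<sigma>, pl \<tau>) * (if \<sigma> = \<sigma>0 then 2 ^ n else 0) * (if \<tau> = \<tau>0 then 2 ^ n else 0))
        = w (pl \<sigma>, pl \<tau>0) * (if \<sigma> = \<sigma>0 then 2 ^ n else 0) * 2 ^ n" .
  qed
  also have "\<dots> = (\<Sum>\<sigma>\<in>G. if \<sigma> = \<sigma>0 then w (pl \<sigma>0, pl \<tau>0) * 2 ^ n * 2 ^ n else 0)"
    by (rule sum.cong) auto
  also have "\<dots> = 2 ^ n * 2 ^ n * w (pl \<sigma>0, pl \<tau>0)"
    using s0 finite_aut by (simp add: sum.delta mult_ac)
  finally show ?thesis unfolding P_def .
qed

lemma char_pairing_abs_le_norm1: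
  assumes w: "w \<in> wedge2_LOG_units L"
    and ch: "is_character ch" and ps: "is_character ps"
  shows "\<bar>char_pairing ch ps w\<bar> \<le> 2 * norm1_wedge2 L w"
proof -
  define Pairs where "Pairs = {(v1, v2). v1 \<in> arch_places L \<and> v2 \<in> arch_places L \<and> v1 \<noteq> v2}"
  have fAP: "finite (arch_places L)" unfolding arch_places_eq using finite_aut by simp
  have "(\<Sum>p\<in>Pairs. \<bar>w p\<bar>) = (\<Sum>p\<in>arch_places L \<times> arch_places L. \<bar>w p\<bar>)"
  proof (rule sum.mono_neutral_left)
    show "finite (arch_places L \<times> arch_places L)" using fAP by simp
    show "Pairs \<subseteq> arch_places L \<times> arch_places L" unfolding Pairs_def by auto
    show "\<forall>p\<in>arch_places L \<times> arch_places L - Pairs. \<bar>w p\<bar> = 0"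
      unfolding Pairs_def using wedge2_LOG_units_diag[OF w] by auto
  qed
  also have "arch_places L \<times> arch_places L = (\<lambda>(\<sigma>,\<tau>). (pl \<sigma>, pl \<tau>)) ` (G \<times> G)"
    unfolding arch_places_eq by auto
  also have "(\<Sum>p\<in>(\<lambda>(\<sigma>,\<tau>). (pl \<sigma>, pl \<tau>)) ` (G \<times> G). \<bar>w p\<bar>) = (\<Sum>(\<sigma>,\<tau>)\<in>G \<times> G. \<bar>w (pl \<sigma>, pl \<tau>)\<bar>)"
  proof (subst sum.reindex)
    show "inj_on (\<lambda>(\<sigma>,\<tau>). (pl \<sigma>, pl \<tau>)) (G \<times> G)"
      using inj_on_pl by (auto simp: inj_on_def)
  qed (simp add: case_prod_unfold)
  also have "\<dots> = (\<Sum>\<sigma>\<in>G. \<Sum>\<tau>\<in>G. \<bar>w (pl \<sigma>, pl \<tau>)\<bar>)" by (simp add: sum.cartesian_product)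
  finally have S: "(\<Sum>p\<in>Pairs. \<bar>w p\<bar>) = (\<Sum>\<sigma>\<in>G. \<Sum>\<tau>\<in>G. \<bar>w (pl \<sigma>, pl \<tau>)\<bar>)" .
  have "\<bar>char_pairing ch ps w\<bar> \<le> (\<Sum>\<sigma>\<in>G. \<bar>\<Sum>\<tau>\<in>G. w (pl \<sigma>, pl \<tau>) * ch \<sigma> * ps \<tau>\<bar>)"
    unfolding char_pairing_def by (rule sum_abs)
  also have "\<dots> \<le> (\<Sum>\<sigma>\<in>G. \<Sum>\<tau>\<in>G. \<bar>w (pl \<sigma>, pl \<tau>) * ch \<sigma> * ps \<tau>\<bar>)"
    by (intro sum_mono sum_abs)
  also have "\<dots> = (\<Sum>\<sigma>\<in>G. \<Sum>\<tau>\<in>G. \<bar>w (pl \<sigma>, pl \<tau>)\<bar>)"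
    using is_character_values[OF ch] is_character_values[OF ps]
    by (intro sum.cong refl) (force simp: abs_mult)
  finally show ?thesis using S unfolding norm1_wedge2_def Pairs_def by simp
qed

lemma exists_chi_pairing_nonzero:
  assumes w: "w \<in> wedge2_LOG_units L" and nz: "w \<noteq> (\<lambda>_. 0)"
  obtains S1 S2 where "S1 \<subseteq> {..<n}" "S2 \<subseteq> {..<n}" "char_pairing (chi S1) (chi S2) w \<noteq> 0"
proof -
  obtain v1 v2 where v: "w (v1, v2) \<noteq> 0" using nz by fastforce
  then have "v1 \<in> arch_places L" "v2 \<in> arch_places L" using wedge2_LOG_units_outside[OF w] by blast+
  then obtain \<sigma>0 \<tau>0 where st: "\<sigma>0 \<in> G" "\<tau>0 \<in> G" "v1 = pl \<sigma>0" "v2 = pl \<tau>0"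
    unfolding arch_places_eq by blast
  have "(\<Sum>S1\<in>Pow {..<n}. \<Sum>S2\<in>Pow {..<n}. char_pairing (chi S1) (chi S2) w * chi S1 \<sigma>0 * chi S2 \<tau>0) \<noteq> 0"
    using chi_fourier_inversion[OF st(1,2), of w] v st by simp
  then obtain S1 S2 where "S1 \<in> Pow {..<n}" "S2 \<in> Pow {..<n}"
    "char_pairing (chi S1) (chi S2) w * chi S1 \<sigma>0 * chi S2 \<tau>0 \<noteq> 0"
    by (meson sum.not_neutral_contains_not_neutral)
  then show ?thesis using that by auto
qed

lemma char_pairing_abs_ge_generators:
  assumes c1: "\<forall>\<epsilon>\<in>units L. \<exists>k::int. char_regulator ch \<epsilon> = of_int k * c1" and "c1 \<ge> 0"
    and c2: "\<forall>\<epsilon>\<in>units L. \<exists>k::int. char_regulator ps \<epsilon> = of_int k * c2" and "c2 \<ge> 0"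
    and w: "w \<in> wedge2_LOG_units L" and nz: "char_pairing ch ps w \<noteq> 0"
  shows "\<bar>char_pairing ch ps w\<bar> \<ge> c1 * c2" and "c1 \<noteq> 0" and "c2 \<noteq> 0"
proof -
  obtain k where k: "char_pairing ch ps w = of_int k * c1 * c2"
    using char_pairing_lattice[OF c1 c2 w] by blast
  then show "c1 \<noteq> 0" "c2 \<noteq> 0" using nz by auto
  have "\<bar>of_int k :: real\<bar> \<ge> 1" using k nz by auto
  moreover have "\<bar>char_pairing ch ps w\<bar> = \<bar>of_int k\<bar> * (c1 * c2)"
    using k \<open>c1 \<ge> 0\<close> \<open>c2 \<ge> 0\<close> by (simp add: abs_mult)
  ultimately show "\<bar>char_pairing ch ps w\<bar> \<ge> c1 * c2"
    using mult_right_mono[of 1 "\<bar>of_int k :: real\<bar>" "c1 * c2"] \<open>c1 \<ge> 0\<close> \<open>c2 \<ge> 0\<close> by simp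
qed

lemma char_pairing_abs_ge:
  assumes w: "w \<in> wedge2_LOG_units L" and ch: "is_character ch" and ps: "is_character ps"
    and nz: "char_pairing ch ps w \<noteq> 0"
  shows "\<bar>char_pairing ch ps w\<bar> \<ge> 4 * ln ((1 + sqrt 5) / 2) * ln (1 + sqrt 2)"
proof -
  define a where "a = 2 * ln ((1 + sqrt 5) / 2)"
  define b where "b = 2 * ln (1 + sqrt 2)"
  have a0: "a > 0" unfolding a_def using ln_golden_ratio_pos by simp
  have "sqrt 5 \<le> 1 + 2 * sqrt (2::real)" using sqrt5_bounds(2) sqrt2_bounds(1) by linarith
  then have ab: "a \<le> b" unfolding a_def b_def by (simp add: add_pos_nonneg)
  obtain e1 where e1: "e1 \<in> units L" "char_regulator ch e1 \<ge> 0"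
      "\<forall>\<epsilon>\<in>units L. \<exists>k::int. char_regulator ch \<epsilon> = of_int k * char_regulator ch e1"
    using char_regulator_cyclic[OF ch] by blast
  obtain e2 where e2: "e2 \<in> units L" "char_regulator ps e2 \<ge> 0"
      "\<forall>\<epsilon>\<in>units L. \<exists>k::int. char_regulator ps \<epsilon> = of_int k * char_regulator ps e2"
    using char_regulator_cyclic[OF ps] by blast
  define c1 where "c1 = char_regulator ch e1"
  define c2 where "c2 = char_regulator ps e2"
  have ge: "\<bar>char_pairing ch ps w\<bar> \<ge> c1 * c2" and "c1 \<noteq> 0" "c2 \<noteq> 0"
    using char_pairing_abs_ge_generators[OF e1(3,2) e2(3,2) w nz] unfolding c1_def c2_def by auto
  have c1a: "c1 \<ge> a" and c2a: "c2 \<ge> a"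
    using char_regulator_zero_or_ge[OF ch e1(1)] char_regulator_zero_or_ge[OF ps e2(1)]
      e1(2) e2(2) \<open>c1 \<noteq> 0\<close> \<open>c2 \<noteq> 0\<close> unfolding a_def c1_def c2_def by auto
  have "c1 \<ge> b \<or> c2 \<ge> b"
  proof (rule ccontr)
    assume "\<not> ?thesis"
    then have "ch h = ps h" if "h \<in> G" for h
      using characters_eq_if_small_regulators[OF ch ps e1(1) e2(1) _ _ _ _ that]
        c1a c2a a0 unfolding b_def c1_def c2_def by auto
    then show False using char_pairing_same_character[OF w] nz by blast
  qed
  then have "c1 * c2 \<ge> a * b"
  proof
    assume "c1 \<ge> b"
    then show ?thesis using c2a a0 ab mult_mono[of b c1 a c2] by (simp add: mult.commute)
  next
    assume "c2 \<ge> b"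
    then show ?thesis using c1a a0 ab mult_mono[of a c1 b c2] by simp
  qed
  then show ?thesis using ge unfolding a_def b_def by simp
qed

end

theorem theorem1:
  fixes n :: nat and L :: "complex set"
    and w :: "(complex \<Rightarrow> real) \<times> (complex \<Rightarrow> real) \<Rightarrow> real"
  assumes "n \<ge> 2"
    and "number_field L" and "totally_real L" and "galois_over_Q L"
    and "Gal L \<cong> Z2_power n"
    and "w \<in> wedge2_LOG_units L" and "w \<noteq> (\<lambda>_. 0)"
  shows "norm1_wedge2 L w \<ge> 2 * ln ((1 + sqrt 5) / 2) * ln (1 + sqrt 2)"
proof -
  obtain \<phi> where "\<phi> \<in> iso (Gal L) (Z2_power n)" using assms(5) unfolding is_iso_def by blast
  then interpret multiquadratic_field L n \<phi> using assms(2-4) by unfold_locales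
  obtain S1 S2 where S: "S1 \<subseteq> {..<n}" "S2 \<subseteq> {..<n}" "char_pairing (chi S1) (chi S2) w \<noteq> 0"
    using exists_chi_pairing_nonzero[OF assms(6,7)] by blast
  note chars = chi_is_character[OF S(1)] chi_is_character[OF S(2)]
  have "4 * ln ((1 + sqrt 5) / 2) * ln (1 + sqrt 2) \<le> \<bar>char_pairing (chi S1) (chi S2) w\<bar>"
    using char_pairing_abs_ge[OF assms(6) chars S(3)] .
  also have "\<dots> \<le> 2 * norm1_wedge2 L w"
    using char_pairing_abs_le_norm1[OF assms(6) chars] .
  finally show ?thesis by (simp add: mult_ac)
qed

end
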